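(* Let $P_Z$ be a distribution on $\mathcal{Z}$, let $S=(Z_1,\ldots,Z_n)$ consist of $n$ i.i.d. samples from $P_Z$, and let $W\in\mathcal{W}$ be a hypothesis produced by a learning algorithm from $S$. Let $\ell:\mathcal{W}\times\mathcal{Z}\to\mathbb{R}$ be a loss function such that $(\mathcal{W},\rho)$ is Polish, $w\mapsto\ell(w,z)$ is $L$-Lipschitz under $\rho$ for every $z$, and $\ell$ takes values in $[a,b]$. Let $J$ be uniformly distributed on $[n]$, independent of $W$ and $S$, and let $R$ be a random variable independent of $S$ and $J$. Then $$\big|\overline{\mathrm{gen}}(W,S)\big| \le (b-a)\,\mathbb{E}\big[\mathrm{TV}(P_{W|S,R},P_{W|S^{-J},R})\big] \le \frac{b-a}{n}\sum_{j=1}^n\mathbb{E}\big[\Psi\big(D(P_{W|S,R}\,\|\,P_{W|S^{-j},R})\big)\big].$$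
   Context: Population risk $\mathscr{L}_{P_Z}(w)=\mathbb{E}[\ell(w,Z)]$; empirical risk $\mathscr{L}_s(w)=\frac1n\sum_i\ell(w,z_i)$; $\overline{\mathrm{gen}}(W,S)=\mathbb{E}[\mathscr{L}_{P_Z}(W)-\mathscr{L}_S(W)]$. $S^{-j}=S\setminus Z_j$ is the dataset with the $j$-th sample removed. $\mathrm{TV}(P,Q)=\sup_A\{P(A)-Q(A)\}$; $D(\cdot\|\cdot)$ is relative entropy; $\Psi(x)=\sqrt{\min\{x/2,1-e^{-x}\}}$. $L$-Lipschitz under $\rho$ means $|f(x)-f(y)|\le L\rho(x,y)$. *)

theory Defs
  imports "HOL-Probability.Probability"
begin

definition tv_dist :: "'a measure \<Rightarrow> 'a measure \<Rightarrow> real" where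
  "tv_dist P Q = (SUP A \<in> sets P. measure P A - measure Q A)"

text \<open>Relative entropy D(P || Q) (natural logarithm), with value infinity
  when P is not absolutely continuous w.r.t. Q or the log-density is not integrable.
  RN_deriv Q P is the density dP/dQ.\<close>
definition rel_entropy :: "'a measure \<Rightarrow> 'a measure \<Rightarrow> ereal" where
  "rel_entropy P Q =
     (if absolutely_continuous Q P \<and> integrable P (\<lambda>x. ln (enn2real (RN_deriv Q P x)))
      then ereal (\<integral>x. ln (enn2real (RN_deriv Q P x)) \<partial>P)
      else \<infinity>)"

definition Psi :: "ereal \<Rightarrow> real" where
  "Psi x = (if x = \<infinity> then 1
            else sqrt (min (real_of_ereal x / 2) (1 - exp (- real_of_ereal x))))"

definition sample_dist :: "nat \<Rightarrow> 'z measure \<Rightarrow> (nat \<Rightarrow> 'z) measure" where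
  "sample_dist n PZ = PiM {0..<n} (\<lambda>_. PZ)"

text \<open>P_{W|S^{-j},R}: given S = s and R = r, the conditional law of W given (S^{-j}, R)
  is obtained by averaging the kernel P_{W|S,R} over the (independent) removed sample Z_j.\<close>
definition loo_kernel ::
  "'z measure \<Rightarrow> ((nat \<Rightarrow> 'z) \<times> 'r \<Rightarrow> 'w measure) \<Rightarrow> nat \<Rightarrow> (nat \<Rightarrow> 'z) \<Rightarrow> 'r \<Rightarrow> 'w measure" where
  "loo_kernel PZ K j s r = PZ \<bind> (\<lambda>z. K (s(j := z), r))"

text \<open>Expected generalization gap E[L_{P_Z}(W) - L_S(W)], where (S,R) ~ P_S x P_R and
  W | (S,R) ~ K(S,R).\<close>
definition exp_gen ::
  "nat \<Rightarrow> 'z measure \<Rightarrow> 'r measure \<Rightarrow> ((nat \<Rightarrow> 'z) \<times> 'r \<Rightarrow> 'w measure) \<Rightarrow> ('w \<Rightarrow> 'z \<Rightarrow> real) \<Rightarrow> real" where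
  "exp_gen n PZ PR K loss =
     (\<integral>sr. (\<integral>w. (\<integral>z. loss w z \<partial>PZ) - (\<Sum>i<n. loss w (fst sr i)) / real n \<partial>K sr)
        \<partial>(sample_dist n PZ \<Otimes>\<^sub>M PR))"

end

theory Submission
  imports Defs
begin

(* Exchanging the j-th training sample with a fresh copy shows that the expected generalization
   gap is the average over j of E[\<integral> loss(w, Z_j) dP_{W|S^{-j},R} - \<integral> loss(w, Z_j) dP_{W|S,R}].
   A loss with values in [a, b] moves an expectation by at most (b - a) TV between the two laws,
   and TV(P, Q) \<le> \<Psi>(D(P || Q)) follows from the Donsker-Varadhan inequality applied to t 1_A,
   which reduces to Pinsker's inequality (via Hoeffding's lemma) and to the Bretagnolle-Huber
   inequality for Bernoulli laws.
   For the expectations to make sense, TV and relative entropy between kernels into a Polish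
   space are shown to be measurable by writing them as suprema over countable families: finite
   unions of basis sets (by outer regularity) and step functions on such sets (by the
   Donsker-Varadhan variational formula). *)

section \<open>The Donsker--Varadhan inequality\<close>

definition donsker_varadhan :: "'a measure \<Rightarrow> 'a measure \<Rightarrow> ('a \<Rightarrow> real) \<Rightarrow> real" where
  "donsker_varadhan P Q g = (\<integral>x. g x \<partial>P) - ln (\<integral>x. exp (g x) \<partial>Q)"

lemma AE_RN_deriv_pos:
  assumes P: "prob_space P" and Q: "prob_space Q" and sets_eq: "sets P = sets Q"
    and ac: "absolutely_continuous Q P"
  shows "AE x in P. 0 < enn2real (RN_deriv Q P x)"
proof -
  interpret P: prob_space P by fact
  interpret Q: prob_space Q by fact
  have "AE x in Q. RN_deriv Q P x \<noteq> \<infinity>"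
    by (rule Q.RN_deriv_finite[OF P.sigma_finite_measure_axioms ac sets_eq])
  then have "AE x in P. RN_deriv Q P x \<noteq> \<infinity>"
    by (rule absolutely_continuous_AE[OF sets_eq ac])
  moreover have "AE x in P. RN_deriv Q P x \<noteq> 0"
    by (subst Q.density_RN_deriv[OF ac sets_eq, symmetric]) (auto simp: AE_density)
  ultimately show ?thesis
    by eventually_elim (auto simp: enn2real_positive_iff less_top zero_less_iff_neq_zero)
qed

lemma nn_integral_le_via_RN_deriv:
  assumes P: "prob_space P" and Q: "prob_space Q" and sets_eq: "sets P = sets Q"
    and ac: "absolutely_continuous Q P" and v[measurable]: "v \<in> borel_measurable Q"
    and u: "\<And>x. 0 \<le> u x"
    and le: "\<And>x. 0 < enn2real (RN_deriv Q P x) \<Longrightarrow> enn2real (RN_deriv Q P x) * v x \<le> u x"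
  shows "(\<integral>\<^sup>+x. ennreal (v x) \<partial>P) \<le> (\<integral>\<^sup>+x. ennreal (u x) \<partial>Q)"
proof -
  interpret P: prob_space P by fact
  interpret Q: prob_space Q by fact
  define f where "f = RN_deriv Q P"
  have dens: "density Q f = P" unfolding f_def by (rule Q.density_RN_deriv[OF ac sets_eq])
  have "(\<integral>\<^sup>+x. ennreal (v x) \<partial>P) = (\<integral>\<^sup>+x. f x * ennreal (v x) \<partial>Q)"
    unfolding dens[symmetric] by (rule nn_integral_density) (auto simp: f_def)
  also have "\<dots> \<le> (\<integral>\<^sup>+x. ennreal (u x) \<partial>Q)"
  proof (rule nn_integral_mono_AE)
    show "AE x in Q. f x * ennreal (v x) \<le> ennreal (u x)"
      using Q.RN_deriv_finite[OF P.sigma_finite_measure_axioms ac sets_eq]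
    proof eventually_elim
      case (elim x)
      then have f: "f x = ennreal (enn2real (f x))" by (simp add: f_def less_top)
      show ?case
      proof (cases "f x = 0")
        case False
        then have "0 < enn2real (f x)"
          using elim by (simp add: f_def enn2real_positive_iff less_top zero_less_iff_neq_zero)
        then have "enn2real (f x) * v x \<le> u x" using le by (simp add: f_def)
        then show ?thesis by (subst f) (simp add: ennreal_mult'[symmetric] ennreal_leI)
      qed simp
    qed
  qed
  finally show ?thesis .
qed

lemma
  fixes g :: "'a \<Rightarrow> real"
  assumes Q: "prob_space Q" and g: "g \<in> borel_measurable Q" and bnd: "\<And>x. \<bar>g x\<bar> \<le> B"
  shows integrable_exp_bounded: "integrable Q (\<lambda>x. exp (g x))"
    and exp_neg_le_integral_exp: "exp (- B) \<le> (\<integral>x. exp (g x) \<partial>Q)"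
proof -
  interpret Q: prob_space Q by fact
  have bnd': "- B \<le> g x" "g x \<le> B" for x using bnd[of x] by auto
  show int: "integrable Q (\<lambda>x. exp (g x))"
    using g by (intro Q.integrable_const_bound[where B="exp B"] AE_I2) (auto simp: bnd')
  show "exp (- B) \<le> (\<integral>x. exp (g x) \<partial>Q)"
    using int by (intro Q.integral_ge_const AE_I2) (auto simp: bnd')
qed

lemma integral_exp_div_RN_deriv_le_1:
  assumes P: "prob_space P" and Q: "prob_space Q" and sets_eq: "sets P = sets Q"
    and ac: "absolutely_continuous Q P"
    and g[measurable]: "g \<in> borel_measurable Q" and bnd: "\<And>x. \<bar>g x\<bar> \<le> B"
  defines "u x \<equiv> exp (g x) / (\<integral>x. exp (g x) \<partial>Q) / enn2real (RN_deriv Q P x)"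
  shows "integrable P u" and "(\<integral>x. u x \<partial>P) \<le> 1"
proof -
  have u_nonneg: "0 \<le> u x" for x by (simp add: u_def)
  have u_meas[measurable]: "u \<in> borel_measurable Q" unfolding u_def by measurable
  have "(\<integral>\<^sup>+x. ennreal (u x) \<partial>P) \<le> (\<integral>\<^sup>+x. ennreal (exp (g x) / (\<integral>x. exp (g x) \<partial>Q)) \<partial>Q)"
    by (rule nn_integral_le_via_RN_deriv[OF P Q sets_eq ac u_meas]) (auto simp: u_def)
  also have "\<dots> = ennreal (\<integral>x. exp (g x) / (\<integral>x. exp (g x) \<partial>Q) \<partial>Q)"
    using integrable_exp_bounded[OF Q g bnd] by (intro nn_integral_eq_integral) auto
  also have "(\<integral>x. exp (g x) / (\<integral>x. exp (g x) \<partial>Q) \<partial>Q) = 1"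
  proof -
    have "0 < (\<integral>x. exp (g x) \<partial>Q)"
      using exp_neg_le_integral_exp[OF Q g bnd] exp_gt_zero[of "- B"] by linarith
    then show ?thesis by simp
  qed
  finally have u_le: "(\<integral>\<^sup>+x. ennreal (u x) \<partial>P) \<le> 1" by simp
  show u_int: "integrable P u"
  proof (rule integrableI_nonneg)
    show "u \<in> borel_measurable P" using u_meas by (simp add: measurable_cong_sets[OF sets_eq])
    show "(\<integral>\<^sup>+x. ennreal (u x) \<partial>P) < \<infinity>"
      using u_le ennreal_one_less_top unfolding infinity_ennreal_def by (rule le_less_trans)
  qed (simp add: u_nonneg)
  show "(\<integral>x. u x \<partial>P) \<le> 1"
    using u_le by (subst (asm) nn_integral_eq_integral[OF u_int]) (auto simp: u_nonneg)
qed

lemma donsker_varadhan_le_rel_entropy: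
  assumes P: "prob_space P" and Q: "prob_space Q" and sets_eq: "sets P = sets Q"
    and g[measurable]: "g \<in> borel_measurable Q" and bnd: "\<And>x. \<bar>g x\<bar> \<le> B"
  shows "ereal (donsker_varadhan P Q g) \<le> rel_entropy P Q"
proof (cases "absolutely_continuous Q P \<and> integrable P (\<lambda>x. ln (enn2real (RN_deriv Q P x)))")
  case True
  interpret P: prob_space P by fact
  let ?F = "\<lambda>x. enn2real (RN_deriv Q P x)"
  define c where "c = ln (\<integral>x. exp (g x) \<partial>Q)"
  define u where "u x = exp (g x) / (\<integral>x. exp (g x) \<partial>Q) / ?F x" for x
  have ac: "absolutely_continuous Q P" and h_int: "integrable P (\<lambda>x. ln (?F x))"
    using True by auto
  have g_int: "integrable P g"
    using g bnd by (intro P.integrable_const_bound[where B=B] AE_I2) (auto simp: measurable_cong_sets[OF sets_eq])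
  have exp_pos: "0 < (\<integral>x. exp (g x) \<partial>Q)"
    using exp_neg_le_integral_exp[OF Q g bnd] exp_gt_zero[of "- B"] by linarith
  note u = integral_exp_div_RN_deriv_le_1[OF P Q sets_eq ac g bnd, folded u_def]
  \<comment> \<open>Gibbs' inequality \<open>ln u \<le> u - 1\<close>\<close>
  have "(\<integral>x. g x - c - ln (?F x) \<partial>P) \<le> (\<integral>x. u x - 1 \<partial>P)"
  proof (rule integral_mono_AE)
    show "AE x in P. g x - c - ln (?F x) \<le> u x - 1"
      using AE_RN_deriv_pos[OF P Q sets_eq ac]
    proof eventually_elim
      case (elim x)
      then have "ln (u x) = g x - c - ln (?F x)" using exp_pos by (simp add: u_def c_def ln_div ln_mult)
      with ln_le_minus_one[of "u x"] elim exp_pos show ?case by (simp add: u_def)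
    qed
  qed (use g_int h_int u in auto)
  then have "(\<integral>x. g x \<partial>P) - c - (\<integral>x. ln (?F x) \<partial>P) \<le> 0"
    using u g_int h_int by (simp add: P.prob_space)
  then show ?thesis
    using True by (simp add: rel_entropy_def donsker_varadhan_def c_def)
qed (auto simp: rel_entropy_def)

lemma rel_entropy_nonneg:
  assumes P: "prob_space P" and Q: "prob_space Q" and sets_eq: "sets P = sets Q"
  shows "0 \<le> rel_entropy P Q"
  using donsker_varadhan_le_rel_entropy[OF P Q sets_eq, of "\<lambda>_. 0" 0]
  by (simp add: donsker_varadhan_def prob_space.prob_space[OF P] prob_space.prob_space[OF Q]
      zero_ereal_def)

lemma donsker_varadhan_indicator:
  assumes P: "prob_space P" and Q: "prob_space Q" and sets_eq: "sets P = sets Q"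
    and A: "A \<in> sets P"
  shows "donsker_varadhan P Q (\<lambda>x. t * indicator A x)
           = t * measure P A - ln (1 - measure Q A + measure Q A * exp t)"
proof -
  interpret Q: prob_space Q by fact
  have AQ: "A \<in> sets Q" using A sets_eq by simp
  have "(\<lambda>x. exp (t * indicator A x)) = (\<lambda>x. 1 + (exp t - 1) * indicator A x)"
    by (auto simp: indicator_def)
  then have "(\<integral>x. exp (t * indicator A x) \<partial>Q) = (\<integral>x. 1 + (exp t - 1) * indicator A x \<partial>Q)"
    by simp
  also have "\<dots> = 1 - measure Q A + measure Q A * exp t"
    using AQ by (subst Bochner_Integration.integral_add)
      (auto simp: Q.prob_space Q.emeasure_finite less_top[symmetric] algebra_simps)
  finally show ?thesis
    using A by (simp add: donsker_varadhan_def)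
qed

section \<open>Pinsker and Bretagnolle--Huber bounds for total variation\<close>

lemma bernoulli_pinsker:
  fixes p q k :: real
  assumes q0: "0 \<le> q" and qp: "q < p"
    and H: "\<And>t. t * p - ln (1 - q + q * exp t) \<le> k"
  shows "(p - q)^2 \<le> k / 2"
proof -
  define t where "t = 4 * (p - q)"
  have "- t * q + ln (1 + q * (exp t - 1)) \<le> t^2 / 8"
    using Hoeffdings_lemma_aux[of t q] qp q0 by (simp add: t_def)
  moreover have "1 + q * (exp t - 1) = 1 - q + q * exp t" by (simp add: algebra_simps)
  moreover have "t * (p - q) - t^2 / 8 = 2 * (p - q)^2"
    by (simp add: t_def power2_eq_square field_simps)
  ultimately show ?thesis using H[of t] by (simp add: algebra_simps)
qed

lemma bhattacharyya_bernoulli_le: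
  fixes p q :: real
  assumes "0 \<le> p" "p \<le> 1" "0 \<le> q" "q \<le> 1"
  shows "(sqrt (p * q) + sqrt ((1 - p) * (1 - q)))^2 \<le> 1 - (p - q)^2"
proof -
  have sq: "(sqrt (p * q))^2 = p * q" "(sqrt ((1 - p) * (1 - q)))^2 = (1 - p) * (1 - q)"
    using assms by simp_all
  have "sqrt (p * q) * sqrt ((1 - p) * (1 - q)) = sqrt ((p * (1 - p)) * (q * (1 - q)))"
    by (simp add: real_sqrt_mult[symmetric] ac_simps)
  also have "\<dots> \<le> (p * (1 - p) + q * (1 - q)) / 2"
    using assms by (intro arith_geo_mean_sqrt) auto
  finally show ?thesis
    unfolding power2_sum sq by (simp add: power2_eq_square algebra_simps)
qed

lemma exp_neg_le_bhattacharyya_bernoulli: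
  fixes p q k :: real
  assumes q0: "0 < q" and qp: "q < p" and p1: "p < 1"
    and H: "\<And>t. t * p - ln (1 - q + q * exp t) \<le> k"
  shows "exp (- k) \<le> (sqrt (p * q) + sqrt ((1 - p) * (1 - q)))^2"
proof -
  have p0: "0 < p" using q0 qp by linarith
  \<comment> \<open>\<open>t = ln r\<close> is the optimal tilt; then \<open>k\<close> dominates the binary relative entropy\<close>
  define r where "r = p * (1 - q) / (q * (1 - p))"
  define a where "a = sqrt (q / p)"
  define b where "b = sqrt ((1 - q) / (1 - p))"
  have pos: "0 < r" "0 < a" "0 < b" "0 < 1 - p" "0 < 1 - q"
    using q0 p1 p0 qp by (auto simp: r_def a_def b_def)
  have S_pos: "0 < sqrt (p * q) + sqrt ((1 - p) * (1 - q))"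
    using p0 q0 p1 qp by (intro add_pos_nonneg) auto
  have "1 - q + q * exp (ln r) = (1 - q) / (1 - p)"
    using pos q0 p1 by (simp add: r_def field_simps)
  then have "ln r * p - ln ((1 - q) / (1 - p)) \<le> k" using H[of "ln r"] by simp
  moreover have "ln r = ln p + ln (1 - q) - ln q - ln (1 - p)"
    using pos q0 p1 p0 by (simp add: r_def ln_div ln_mult)
  ultimately have KL: "- k \<le> p * (ln q - ln p) + (1 - p) * (ln (1 - q) - ln (1 - p))"
    using pos by (simp add: ln_div algebra_simps)
  have la: "ln q - ln p = 2 * ln a" and lb: "ln (1 - q) - ln (1 - p) = 2 * ln b"
    using pos q0 p1 p0 by (simp_all add: a_def b_def ln_sqrt ln_div)
  from KL have "- k \<le> p * (2 * ln a) + (1 - p) * (2 * ln b)" unfolding la lb .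
  also have "\<dots> \<le> 2 * ln (p * a + (1 - p) * b)"
  proof -
    have "p * ln a + (1 - p) * ln b \<le> ln (p * a + (1 - p) * b)"
      using ln_concave pos p0 by (simp add: concave_on_iff)
    then show ?thesis by simp
  qed
  also have "p * a + (1 - p) * b = sqrt (p * q) + sqrt ((1 - p) * (1 - q))"
  proof -
    have "x * sqrt (y / x) = sqrt (x * y)" if "0 < x" for x y :: real
    proof -
      have "sqrt (x * y) = sqrt (x^2) * sqrt (y / x)"
        unfolding real_sqrt_mult[symmetric] using that by (simp add: power2_eq_square)
      then show ?thesis using that by simp
    qed
    then show ?thesis using pos p0 by (simp add: a_def b_def)
  qed
  also have "2 * ln (sqrt (p * q) + sqrt ((1 - p) * (1 - q)))
      = ln ((sqrt (p * q) + sqrt ((1 - p) * (1 - q)))^2)"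
    using S_pos by (simp add: ln_realpow)
  finally show ?thesis using S_pos by (subst (asm) ln_ge_iff) auto
qed

lemma bernoulli_bretagnolle_huber:
  fixes p q k :: real
  assumes q0: "0 \<le> q" and qp: "q < p" and p1: "p \<le> 1"
    and H: "\<And>t. t * p - ln (1 - q + q * exp t) \<le> k"
  shows "(p - q)^2 \<le> 1 - exp (- k)"
proof -
  have p0: "0 < p" using q0 qp by linarith
  consider "q = 0" | "0 < q" "p = 1" | "0 < q" "p < 1" using q0 p1 by linarith
  then show ?thesis
  proof cases
    case 1
    then show ?thesis using H[of "(k + 1) / p"] p0 by simp
  next
    case 2
    have "- k \<le> ln q + ln (2 - q)" using H[of "- ln q"] 2 by (simp add: exp_minus)
    also have "\<dots> = ln (q * (2 - q))" using 2 qp by (simp add: ln_mult)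
    finally have "exp (- k) \<le> q * (2 - q)" using 2 qp by (subst (asm) ln_ge_iff) auto
    then show ?thesis using 2 by (simp add: power2_eq_square algebra_simps)
  next
    case 3
    then have "exp (- k) \<le> (sqrt (p * q) + sqrt ((1 - p) * (1 - q)))^2"
      using qp H by (intro exp_neg_le_bhattacharyya_bernoulli) auto
    also have "\<dots> \<le> 1 - (p - q)^2"
      using 3 qp by (intro bhattacharyya_bernoulli_le) auto
    finally show ?thesis by simp
  qed
qed

lemma Psi_nonneg: "0 \<le> x \<Longrightarrow> 0 \<le> Psi x"
  by (cases x) (auto simp: Psi_def)

lemma Psi_le_1: "Psi x \<le> 1"
  by (auto simp: Psi_def min_le_iff_disj)

lemma Psi_measurable[measurable]: "Psi \<in> borel_measurable borel"
  unfolding Psi_def by measurable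

lemma measure_diff_le_Psi:
  assumes P: "prob_space P" and Q: "prob_space Q" and sets_eq: "sets P = sets Q"
    and A: "A \<in> sets P"
  shows "measure P A - measure Q A \<le> Psi (rel_entropy P Q)"
proof -
  define p where "p = measure P A"
  define q where "q = measure Q A"
  have KL_nonneg: "0 \<le> rel_entropy P Q" by (rule rel_entropy_nonneg[OF P Q sets_eq])
  have q0: "0 \<le> q" and p1: "p \<le> 1" by (auto simp: p_def q_def prob_space.prob_le_1[OF P])
  have "p - q \<le> Psi (rel_entropy P Q)"
  proof (cases "q < p")
    case qp: True
    show ?thesis
    proof (cases "rel_entropy P Q")
      case (real k)
      have H: "t * p - ln (1 - q + q * exp t) \<le> k" for t
      proof -
        have "ereal (donsker_varadhan P Q (\<lambda>x. t * indicator A x)) \<le> rel_entropy P Q"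
          using A sets_eq
          by (intro donsker_varadhan_le_rel_entropy[OF P Q sets_eq, where B="\<bar>t\<bar>"])
            (auto simp: indicator_def)
        then show ?thesis
          unfolding donsker_varadhan_indicator[OF P Q sets_eq A] real by (simp add: p_def q_def)
      qed
      have "(p - q)^2 \<le> min (k / 2) (1 - exp (- k))"
        using bernoulli_pinsker[OF q0 qp H] bernoulli_bretagnolle_huber[OF q0 qp p1 H] by simp
      then have "p - q \<le> sqrt (min (k / 2) (1 - exp (- k)))"
        using qp real_le_rsqrt by blast
      then show ?thesis using real by (simp add: Psi_def)
    qed (use KL_nonneg q0 p1 in \<open>auto simp: Psi_def\<close>)
  qed (use Psi_nonneg[OF KL_nonneg] in simp)
  then show ?thesis by (simp add: p_def q_def)
qed

lemma tv_dist_bdd_above: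
  assumes "prob_space P"
  shows "bdd_above ((\<lambda>A. measure P A - measure Q A) ` X)"
proof -
  have "measure P A - measure Q A \<le> 1" for A
    using prob_space.prob_le_1[OF assms, of A] measure_nonneg[of Q A] by linarith
  then show ?thesis by (intro bdd_aboveI[where M=1]) auto
qed

lemma measure_diff_le_tv_dist:
  assumes "prob_space P" "A \<in> sets P"
  shows "measure P A - measure Q A \<le> tv_dist P Q"
  unfolding tv_dist_def using assms by (intro cSUP_upper tv_dist_bdd_above)

lemma tv_dist_nonneg: "prob_space P \<Longrightarrow> 0 \<le> tv_dist P Q"
  using measure_diff_le_tv_dist[of P "{}" Q] by simp

lemma tv_dist_le_Psi:
  assumes P: "prob_space P" and Q: "prob_space Q" and sets_eq: "sets P = sets Q"
  shows "tv_dist P Q \<le> Psi (rel_entropy P Q)"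
  unfolding tv_dist_def
  by (rule cSUP_least) (use measure_diff_le_Psi[OF P Q sets_eq] in auto)

lemma tv_dist_le_1:
  assumes P: "prob_space P" and Q: "prob_space Q" and sets_eq: "sets P = sets Q"
  shows "tv_dist P Q \<le> 1"
  using tv_dist_le_Psi[OF assms] Psi_le_1 order_trans by blast

lemma tv_dist_commute:
  assumes P: "prob_space P" and Q: "prob_space Q" and sets_eq: "sets P = sets Q"
  shows "tv_dist Q P = tv_dist P Q"
proof -
  have "tv_dist Q P \<le> tv_dist P Q"
    if P: "prob_space P" and Q: "prob_space Q" and sets_eq: "sets P = sets Q" for P Q :: "'a measure"
    unfolding tv_dist_def[of Q P]
  proof (rule cSUP_least)
    fix A assume A: "A \<in> sets Q"
    then have "measure Q A - measure P A = measure P (space P - A) - measure Q (space P - A)"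
      using sets_eq sets_eq_imp_space_eq[OF sets_eq]
        prob_space.prob_compl[OF P, of A] prob_space.prob_compl[OF Q, of A] by simp
    also have "\<dots> \<le> tv_dist P Q"
      using A sets_eq by (intro measure_diff_le_tv_dist[OF P]) auto
    finally show "measure Q A - measure P A \<le> tv_dist P Q" .
  qed auto
  from this[OF P Q sets_eq] this[OF Q P sets_eq[symmetric]] show ?thesis by simp
qed

lemma staircase_approx:
  fixes a d y :: real
  assumes d: "0 < d" and ay: "a \<le> y" and yb: "y \<le> a + real N * d"
  defines "s \<equiv> a + d * (\<Sum>i=1..N. indicator {a + real i * d..} y)"
  shows "s \<le> y \<and> y \<le> s + d"
proof -
  define k where "k = nat \<lfloor>(y - a) / d\<rfloor>"
  have k: "real k \<le> (y - a) / d" "(y - a) / d < real k + 1"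
    using ay d by (auto simp: k_def)
  have level: "a + real i * d \<le> y \<longleftrightarrow> i \<le> k" for i
  proof -
    have "a + real i * d \<le> y \<longleftrightarrow> real i \<le> (y - a) / d" using d by (simp add: field_simps)
    also have "\<dots> \<longleftrightarrow> i \<le> k" using ay d by (simp add: k_def le_floor_iff le_nat_iff)
    finally show ?thesis .
  qed
  have "(\<Sum>i=1..N. indicator {a + real i * d..} y :: real) = (\<Sum>i=1..min N k. 1)"
    by (rule sum.mono_neutral_cong_right) (auto simp: level indicator_def)
  then have s: "s = a + d * min N k" by (simp add: s_def)
  show ?thesis
  proof
    have "d * min N k \<le> d * k" using d by (intro mult_left_mono) auto
    also have "\<dots> \<le> y - a" using k d by (simp add: field_simps)
    finally show "s \<le> y" by (simp add: s)
    show "y \<le> s + d"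
      using k d yb by (cases "k \<le> N") (simp_all add: s min_def field_simps)
  qed
qed

lemma integral_step_fun:
  assumes M: "prob_space M" and A: "\<And>i. A i \<in> sets M"
  shows "integrable M (\<lambda>x. c + d * (\<Sum>i\<in>I. indicator (A i) x))"
    and "(\<integral>x. c + d * (\<Sum>i\<in>I. indicator (A i) x) \<partial>M) = c + d * (\<Sum>i\<in>I. measure M (A i))"
proof -
  interpret M: prob_space M by fact
  show "integrable M (\<lambda>x. c + d * (\<Sum>i\<in>I. indicator (A i) x))"
    "(\<integral>x. c + d * (\<Sum>i\<in>I. indicator (A i) x) \<partial>M) = c + d * (\<Sum>i\<in>I. measure M (A i))"
    using A by (auto simp: M.prob_space M.emeasure_finite less_top[symmetric]
        intro!: integrable_sum integrable_mult_right)
qed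

lemma integral_diff_le_tv_dist_plus_step:
  assumes P: "prob_space P" and Q: "prob_space Q" and sets_eq: "sets P = sets Q"
    and f[measurable]: "f \<in> borel_measurable P" and bnd: "\<And>x. a \<le> f x \<and> f x \<le> b"
    and d: "0 < d" and N: "a + real N * d = b"
  shows "(\<integral>x. f x \<partial>P) - (\<integral>x. f x \<partial>Q) \<le> (b - a) * tv_dist P Q + d"
proof -
  define A where "A i = {x \<in> space P. a + real i * d \<le> f x}" for i :: nat
  define s where "s x = a + d * (\<Sum>i\<in>{1..N}. indicator (A i) x)" for x
  have A: "A i \<in> sets P" "A i \<in> sets Q" for i
    unfolding A_def using sets_eq[symmetric] by measurable
  have fQ: "f \<in> borel_measurable Q" using f by (simp add: measurable_cong_sets[OF sets_eq])
  have f_int: "integrable M f" if "prob_space M" "f \<in> borel_measurable M" for M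
    using bnd
    by (intro finite_measure.integrable_const_bound[where B="\<bar>a\<bar> + \<bar>b\<bar>"] AE_I2 that(2)
        prob_space.finite_measure[OF that(1)]) (simp add: abs_le_iff, smt (verit))
  have s: "s x \<le> f x \<and> f x \<le> s x + d" if "x \<in> space P" for x
    using staircase_approx[OF d, of a "f x" N] bnd[of x] that N
    by (simp add: s_def A_def indicator_def)
  have "f x \<le> (a + d) + d * (\<Sum>i\<in>{1..N}. indicator (A i) x)" if "x \<in> space P" for x
    using s[OF that] unfolding s_def by linarith
  then have "(\<integral>x. f x \<partial>P) \<le> (\<integral>x. (a + d) + d * (\<Sum>i\<in>{1..N}. indicator (A i) x) \<partial>P)"
    using integral_step_fun[of P A, OF P A(1)] f_int[OF P f] by (intro integral_mono) auto
  moreover have "(\<integral>x. s x \<partial>Q) \<le> (\<integral>x. f x \<partial>Q)"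
    using s integral_step_fun[of Q A, OF Q A(2)] f_int[OF Q fQ] sets_eq_imp_space_eq[OF sets_eq]
    by (intro integral_mono) (auto simp: s_def)
  moreover have "(\<integral>x. s x \<partial>P) - (\<integral>x. s x \<partial>Q) = d * (\<Sum>i\<in>{1..N}. measure P (A i) - measure Q (A i))"
    unfolding s_def integral_step_fun[of P A, OF P A(1)] integral_step_fun[of Q A, OF Q A(2)]
    by (simp add: sum_subtractf algebra_simps)
  moreover have "\<dots> \<le> d * (\<Sum>i\<in>{1..N}. tv_dist P Q)"
    using d by (intro mult_left_mono sum_mono measure_diff_le_tv_dist[OF P A(1)]) auto
  moreover have "d * (\<Sum>i\<in>{1..N}. tv_dist P Q) = (b - a) * tv_dist P Q"
    using N by (simp flip: N)
  ultimately show ?thesis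
    unfolding s_def integral_step_fun[of P A, OF P A(1)] by linarith
qed

lemma integral_diff_le_tv_dist:
  assumes P: "prob_space P" and Q: "prob_space Q" and sets_eq: "sets P = sets Q"
    and f: "f \<in> borel_measurable P" and bnd: "\<And>x. a \<le> f x \<and> f x \<le> b"
  shows "(\<integral>x. f x \<partial>P) - (\<integral>x. f x \<partial>Q) \<le> (b - a) * tv_dist P Q"
proof (rule field_le_epsilon)
  fix e :: real assume e: "0 < e"
  have ab: "a \<le> b" using bnd[of undefined] by linarith
  show "(\<integral>x. f x \<partial>P) - (\<integral>x. f x \<partial>Q) \<le> (b - a) * tv_dist P Q + e"
  proof (cases "a = b")
    case True
    then have "\<And>x. f x = a" using bnd by (metis order_antisym)
    then show ?thesis
      using True e by (simp add: prob_space.prob_space[OF P] prob_space.prob_space[OF Q])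
  next
    case False
    obtain N :: nat where N: "(b - a) / e < real N" using reals_Archimedean2 by blast
    moreover have "0 \<le> (b - a) / e" using ab e by simp
    ultimately have N_pos: "0 < N" by (cases N) auto
    have "(\<integral>x. f x \<partial>P) - (\<integral>x. f x \<partial>Q) \<le> (b - a) * tv_dist P Q + (b - a) / real N"
      using False ab N_pos
      by (intro integral_diff_le_tv_dist_plus_step[OF P Q sets_eq f bnd, where N=N]) auto
    moreover have "(b - a) / real N < e" using N N_pos e by (simp add: field_simps)
    ultimately show ?thesis by linarith
  qed
qed

lemma abs_integral_diff_le_tv_dist:
  assumes P: "prob_space P" and Q: "prob_space Q" and sets_eq: "sets P = sets Q"
    and f: "f \<in> borel_measurable P" and bnd: "\<And>x. a \<le> f x \<and> f x \<le> b"
  shows "\<bar>(\<integral>x. f x \<partial>P) - (\<integral>x. f x \<partial>Q)\<bar> \<le> (b - a) * tv_dist P Q"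
proof -
  have fQ: "f \<in> borel_measurable Q" using f by (simp add: measurable_cong_sets[OF sets_eq])
  have "(\<integral>x. f x \<partial>Q) - (\<integral>x. f x \<partial>P) \<le> (b - a) * tv_dist Q P"
    by (rule integral_diff_le_tv_dist[OF Q P sets_eq[symmetric] fQ bnd])
  then have "(\<integral>x. f x \<partial>Q) - (\<integral>x. f x \<partial>P) \<le> (b - a) * tv_dist P Q"
    by (simp add: tv_dist_commute[OF P Q sets_eq])
  with integral_diff_le_tv_dist[OF P Q sets_eq f bnd] show ?thesis by (simp add: abs_le_iff)
qed

section \<open>Measurability of total variation between kernels\<close>

text \<open>For a countable basis this is a countable family of open sets approximating every Borel set
  simultaneously for two finite measures.\<close>

definition finite_Unions :: "'a set set \<Rightarrow> 'a set set" where
  "finite_Unions BB = Union ` {F. finite F \<and> F \<subseteq> BB}"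

lemma countable_finite_Unions: "countable BB \<Longrightarrow> countable (finite_Unions BB)"
  unfolding finite_Unions_def by (intro countable_image countable_Collect_finite_subset)

lemma empty_in_finite_Unions: "{} \<in> finite_Unions BB"
  unfolding finite_Unions_def by (rule image_eqI[where x="{}"]) auto

lemma open_finite_Unions: "topological_basis BB \<Longrightarrow> B \<in> finite_Unions BB \<Longrightarrow> open B"
  unfolding finite_Unions_def topological_basis_def by (auto intro!: open_Union)

lemma open_eq_incseq_finite_Unions:
  assumes BB: "topological_basis BB" "countable BB" and V: "open V"
  obtains D where "\<And>k. D k \<in> finite_Unions BB" "incseq D" "(\<Union>k. D k) = V"
proof
  define S where "S = insert {} {B \<in> BB. B \<subseteq> V}"
  define D where "D k = \<Union>(from_nat_into S ` {..<k})" for k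
  have S: "from_nat_into S i \<in> S" for i by (rule from_nat_into) (simp add: S_def)
  show "D k \<in> finite_Unions BB" for k
  proof -
    have "from_nat_into S ` {..<k} - {{}} \<subseteq> BB" using S by (auto simp: S_def)
    moreover have "D k = \<Union>(from_nat_into S ` {..<k} - {{}})" unfolding D_def by blast
    ultimately show ?thesis unfolding finite_Unions_def by (intro image_eqI) auto
  qed
  show "incseq D" unfolding incseq_def D_def by (intro allI impI Union_mono image_mono) auto
  show "(\<Union>k. D k) = V"
  proof
    show "(\<Union>k. D k) \<subseteq> V" using S by (fastforce simp: D_def S_def)
    show "V \<subseteq> (\<Union>k. D k)"
    proof
      fix x assume "x \<in> V"
      then obtain b where b: "b \<in> BB" "x \<in> b" "b \<subseteq> V"
        using BB(1) V unfolding topological_basis_def by blast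
      then have "b \<in> S" by (simp add: S_def)
      then obtain i where "from_nat_into S i = b"
        using from_nat_into_surj[of S b] BB(2) by (auto simp: S_def)
      then have "x \<in> D (Suc i)" using b by (auto simp: D_def)
      then show "x \<in> (\<Union>k. D k)" by blast
    qed
  qed
qed

lemma exists_open_superset_measure_less:
  fixes M :: "'a::polish_space measure"
  assumes "finite_measure M" "sets M = sets borel" "U \<in> sets borel" "0 < e"
  obtains V where "open V" "U \<subseteq> V" "measure M (V - U) < e"
proof -
  interpret finite_measure M by fact
  have "ennreal (measure M U) < ennreal (measure M U + e)"
    using assms(4) by (intro ennreal_lessI) (auto intro: add_nonneg_pos)
  then have "emeasure M U < emeasure M U + ennreal e"
    using assms(4) by (simp add: emeasure_eq_measure ennreal_plus[symmetric] del: ennreal_plus)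
  moreover have "emeasure M U = (INF V\<in>{V. U \<subseteq> V \<and> open V}. emeasure M V)"
    by (rule outer_regular[OF assms(2) _ assms(3)]) simp
  ultimately obtain V where V: "U \<subseteq> V" "open V" "emeasure M V < emeasure M U + ennreal e"
    by (metis (no_types, lifting) INF_less_iff mem_Collect_eq)
  then have "measure M V < measure M U + e"
    using assms by (simp add: emeasure_eq_measure ennreal_plus[symmetric] ennreal_less_iff
        del: ennreal_plus)
  with V assms(2,3) have "measure M (V - U) < e"
    by (subst finite_measure_Diff) auto
  with V that show ?thesis by blast
qed

lemma finite_Unions_approx:
  fixes P Q :: "'a::polish_space measure"
  assumes P: "finite_measure P" "sets P = sets borel" and Q: "finite_measure Q" "sets Q = sets borel"
    and BB: "topological_basis BB" "countable BB" and U: "U \<in> sets borel" and e: "0 < e"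
  obtains B where "B \<in> finite_Unions BB"
    "measure P (sym_diff U B) < e" "measure Q (sym_diff U B) < e"
proof -
  interpret P: finite_measure P by fact
  interpret Q: finite_measure Q by fact
  obtain V1 where V1: "open V1" "U \<subseteq> V1" "measure P (V1 - U) < e / 2"
    using exists_open_superset_measure_less[OF P U, of "e / 2"] e by auto
  obtain V2 where V2: "open V2" "U \<subseteq> V2" "measure Q (V2 - U) < e / 2"
    using exists_open_superset_measure_less[OF Q U, of "e / 2"] e by auto
  define V where "V = V1 \<inter> V2"
  obtain D where D: "\<And>k. D k \<in> finite_Unions BB" "incseq D" "(\<Union>k. D k) = V"
    using open_eq_incseq_finite_Unions[OF BB, of V] V1 V2 by (auto simp: V_def)
  have D_sets: "range D \<subseteq> sets borel" using D(1) open_finite_Unions[OF BB(1)] by auto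
  have small: "eventually (\<lambda>k. measure M (V - D k) < e / 2) sequentially"
    if "finite_measure M" "sets M = sets borel" for M
  proof -
    interpret finite_measure M by fact
    have "(\<lambda>k. measure M (D k)) \<longlonglongrightarrow> measure M V"
      using finite_Lim_measure_incseq[of D] D D_sets that(2) by simp
    then have "(\<lambda>k. measure M V - measure M (D k)) \<longlonglongrightarrow> measure M V - measure M V"
      by (intro tendsto_diff tendsto_const)
    moreover have "measure M (V - D k) = measure M V - measure M (D k)" for k
      using D D_sets V1 V2 that(2) by (subst finite_measure_Diff) (auto simp: V_def)
    ultimately show ?thesis using e by (intro order_tendstoD) auto
  qed
  obtain k where k: "measure P (V - D k) < e / 2" "measure Q (V - D k) < e / 2"
    using eventually_conj[OF small[OF P] small[OF Q]] eventually_sequentially by auto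
  have bound: "measure M (sym_diff U (D k)) < e"
    if "finite_measure M" "sets M = sets borel" "measure M (V - U) < e / 2" "measure M (V - D k) < e / 2"
    for M
  proof -
    interpret finite_measure M by fact
    have "sym_diff U (D k) \<subseteq> (V - U) \<union> (V - D k)"
      using D(3) U V1 V2 by (auto simp: V_def)
    then have "measure M (sym_diff U (D k)) \<le> measure M ((V - U) \<union> (V - D k))"
      using D_sets U V1 V2 that(2) by (intro finite_measure_mono) (auto simp: V_def)
    also have "\<dots> \<le> measure M (V - U) + measure M (V - D k)"
      using D_sets U V1 V2 that(2) by (intro measure_Un_le) (auto simp: V_def)
    finally show ?thesis using that(3,4) by linarith
  qed
  have "measure P (V - U) \<le> measure P (V1 - U)" "measure Q (V - U) \<le> measure Q (V2 - U)"
    using U V1 V2 P(2) Q(2) by (auto simp: V_def intro!: P.finite_measure_mono Q.finite_measure_mono)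
  then show ?thesis
    using that[OF D(1)] bound[OF P] bound[OF Q] V1 V2 k by force
qed

lemma measure_diff_le_sym_diff:
  assumes P: "finite_measure P" and Q: "finite_measure Q" and sets_eq: "sets P = sets Q"
    and A: "A \<in> sets P" and B: "B \<in> sets P"
  shows "measure P A - measure Q A
    \<le> measure P B - measure Q B + measure P (sym_diff A B) + measure Q (sym_diff A B)"
proof -
  interpret P: finite_measure P by fact
  interpret Q: finite_measure Q by fact
  have "measure P A \<le> measure P (B \<union> sym_diff A B)"
    using A B by (intro P.finite_measure_mono) auto
  also have "\<dots> \<le> measure P B + measure P (sym_diff A B)"
    using A B by (intro measure_Un_le) auto
  moreover have "measure Q B \<le> measure Q (A \<union> sym_diff A B)"
    using A B sets_eq by (intro Q.finite_measure_mono) auto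
  moreover have "\<dots> \<le> measure Q A + measure Q (sym_diff A B)"
    using A B sets_eq by (intro measure_Un_le) auto
  ultimately show ?thesis by linarith
qed

lemma tv_dist_eq_SUP_finite_Unions:
  fixes P Q :: "'a::polish_space measure"
  assumes P: "prob_space P" "sets P = sets borel" and Q: "prob_space Q" "sets Q = sets borel"
    and BB: "topological_basis BB" "countable BB"
  shows "tv_dist P Q = (SUP B\<in>finite_Unions BB. measure P B - measure Q B)"
proof (rule antisym)
  have fin: "finite_measure P" "finite_measure Q"
    using P(1) Q(1) by (auto intro: prob_space.finite_measure)
  have sets_eq: "sets P = sets Q" using P(2) Q(2) by simp
  have sets: "B \<in> sets P" if "B \<in> finite_Unions BB" for B
    using open_finite_Unions[OF BB(1) that] P(2) by auto
  show "tv_dist P Q \<le> (SUP B\<in>finite_Unions BB. measure P B - measure Q B)"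
    unfolding tv_dist_def
  proof (rule cSUP_least)
    fix A assume A: "A \<in> sets P"
    show "measure P A - measure Q A \<le> (SUP B\<in>finite_Unions BB. measure P B - measure Q B)"
    proof (rule field_le_epsilon)
      fix e :: real assume e: "0 < e"
      obtain B where B: "B \<in> finite_Unions BB" "measure P (sym_diff A B) < e / 2"
        "measure Q (sym_diff A B) < e / 2"
        using finite_Unions_approx[OF fin(1) P(2) fin(2) Q(2) BB, of A "e / 2"] A P(2) e by auto
      have "measure P B - measure Q B \<le> (SUP B\<in>finite_Unions BB. measure P B - measure Q B)"
        by (rule cSUP_upper[OF B(1) tv_dist_bdd_above[OF P(1)]])
      then show "measure P A - measure Q A \<le> (SUP B\<in>finite_Unions BB. measure P B - measure Q B) + e"
        using measure_diff_le_sym_diff[OF fin sets_eq A sets[OF B(1)]] B by linarith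
    qed
  qed auto
  show "(SUP B\<in>finite_Unions BB. measure P B - measure Q B) \<le> tv_dist P Q"
    using empty_in_finite_Unions sets by (intro cSUP_least measure_diff_le_tv_dist[OF P(1)]) auto
qed

lemma prob_algebra_kernel:
  assumes "K \<in> M \<rightarrow>\<^sub>M prob_algebra N" "x \<in> space M"
  shows "prob_space (K x)" "sets (K x) = sets N"
  using measurable_space[OF assms] by (auto simp: space_prob_algebra)

lemma measurable_tv_dist:
  fixes K L :: "'b \<Rightarrow> 'a::polish_space measure"
  assumes K: "K \<in> M \<rightarrow>\<^sub>M prob_algebra borel" and L: "L \<in> M \<rightarrow>\<^sub>M prob_algebra borel"
  shows "(\<lambda>x. tv_dist (K x) (L x)) \<in> borel_measurable M"
proof -
  obtain BB :: "'a set set" where BB: "countable BB" "topological_basis BB"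
    using ex_countable_basis by blast
  have [measurable]: "K \<in> M \<rightarrow>\<^sub>M subprob_algebra borel" "L \<in> M \<rightarrow>\<^sub>M subprob_algebra borel"
    using K L by (auto intro: measurable_prob_algebraD)
  have "(\<lambda>x. SUP B\<in>finite_Unions BB. measure (K x) B - measure (L x) B) \<in> borel_measurable M"
  proof (rule borel_measurable_cSUP)
    fix B assume "B \<in> finite_Unions BB"
    then have [measurable]: "B \<in> sets borel" using open_finite_Unions[OF BB(2)] by auto
    show "(\<lambda>x. measure (K x) B - measure (L x) B) \<in> borel_measurable M" by measurable
  next
    fix x assume "x \<in> space M"
    then show "bdd_above ((\<lambda>B. measure (K x) B - measure (L x) B) ` finite_Unions BB)"
      by (intro tv_dist_bdd_above prob_algebra_kernel(1)[OF K])
  qed (rule countable_finite_Unions[OF BB(1)])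
  then show ?thesis
  proof (rule measurable_cong[THEN iffD1, rotated])
    fix x assume x: "x \<in> space M"
    show "(SUP B\<in>finite_Unions BB. measure (K x) B - measure (L x) B) = tv_dist (K x) (L x)"
      using prob_algebra_kernel[OF K x] prob_algebra_kernel[OF L x] BB
      by (intro tv_dist_eq_SUP_finite_Unions[symmetric]) auto
  qed
qed

section \<open>Relative entropy as a supremum over step functions\<close>

lemma integral_RN_deriv_eq_1:
  assumes P: "prob_space P" and Q: "prob_space Q" and sets_eq: "sets P = sets Q"
    and ac: "absolutely_continuous Q P"
  shows "integrable Q (\<lambda>x. enn2real (RN_deriv Q P x))" "(\<integral>x. enn2real (RN_deriv Q P x) \<partial>Q) = 1"
proof -
  interpret P: prob_space P by fact
  interpret Q: prob_space Q by fact
  define f where "f = RN_deriv Q P"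
  have "(\<integral>\<^sup>+x. ennreal (enn2real (f x)) \<partial>Q) = (\<integral>\<^sup>+x. f x \<partial>Q)"
    using Q.RN_deriv_finite[OF P.sigma_finite_measure_axioms ac sets_eq]
    by (intro nn_integral_cong_AE) (auto simp: f_def less_top)
  also have "\<dots> = emeasure (density Q f) (space Q)"
    by (simp add: emeasure_density f_def)
  also have "\<dots> = 1"
    using P.emeasure_space_1 sets_eq_imp_space_eq[OF sets_eq]
    by (simp add: Q.density_RN_deriv[OF ac sets_eq] f_def)
  finally have nn: "(\<integral>\<^sup>+x. ennreal (enn2real (f x)) \<partial>Q) = 1" .
  show int: "integrable Q (\<lambda>x. enn2real (RN_deriv Q P x))"
    using nn by (intro integrableI_nonneg) (auto simp: f_def)
  show "(\<integral>x. enn2real (RN_deriv Q P x) \<partial>Q) = 1"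
    using nn unfolding f_def by (subst (asm) nn_integral_eq_integral[OF int]) auto
qed

lemma donsker_varadhan_ge:
  assumes P: "prob_space P" and Q: "prob_space Q" and sets_eq: "sets P = sets Q"
    and ac: "absolutely_continuous Q P"
    and g[measurable]: "g \<in> borel_measurable Q" and bnd: "\<And>x. \<bar>g x\<bar> \<le> B"
    and exp_le: "\<And>x. exp (g x) \<le> enn2real (RN_deriv Q P x) + exp L"
  shows "(\<integral>x. g x \<partial>P) - exp L \<le> donsker_varadhan P Q g"
proof -
  interpret Q: prob_space Q by fact
  note exp_int = integrable_exp_bounded[OF Q g bnd]
  have pos: "0 < (\<integral>x. exp (g x) \<partial>Q)"
    using exp_neg_le_integral_exp[OF Q g bnd] exp_gt_zero[of "- B"] by linarith
  have "(\<integral>x. exp (g x) \<partial>Q) \<le> (\<integral>x. enn2real (RN_deriv Q P x) + exp L \<partial>Q)"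
    using integral_RN_deriv_eq_1[OF P Q sets_eq ac] exp_int exp_le by (intro integral_mono) auto
  also have "\<dots> = 1 + exp L"
    using integral_RN_deriv_eq_1[OF P Q sets_eq ac] by (simp add: Q.prob_space)
  finally have "ln (\<integral>x. exp (g x) \<partial>Q) \<le> ln (1 + exp L)" using pos by simp
  also have "\<dots> \<le> exp L" by (rule ln_add_one_self_le_self) simp
  finally show ?thesis by (simp add: donsker_varadhan_def)
qed

lemma nn_integral_neg_log_RN_deriv_le_1:
  assumes P: "prob_space P" and Q: "prob_space Q" and sets_eq: "sets P = sets Q"
    and ac: "absolutely_continuous Q P"
  shows "(\<integral>\<^sup>+x. ennreal (max 0 (- ln (enn2real (RN_deriv Q P x)))) \<partial>P) \<le> 1"
proof -
  have "y * max 0 (- ln y) \<le> 1" if "0 < y" for y :: real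
  proof (cases "y < 1")
    case True
    have "- ln y \<le> 1 / y - 1" using ln_le_minus_one[of "1 / y"] that by (simp add: ln_div)
    then have "y * (- ln y) \<le> 1 - y" using that by (simp add: field_simps)
    then show ?thesis using True that by (simp add: max_def)
  qed (simp add: max_def)
  then have "(\<integral>\<^sup>+x. ennreal (max 0 (- ln (enn2real (RN_deriv Q P x)))) \<partial>P) \<le> (\<integral>\<^sup>+x. ennreal 1 \<partial>Q)"
    by (intro nn_integral_le_via_RN_deriv[OF P Q sets_eq ac]) auto
  then show ?thesis by (simp add: prob_space.emeasure_space_1[OF Q])
qed

lemma nn_integral_pos_log_RN_deriv_eq_infinity:
  assumes P: "prob_space P" and Q: "prob_space Q" and sets_eq: "sets P = sets Q"
    and ac: "absolutely_continuous Q P"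
    and h_not_int: "\<not> integrable P (\<lambda>x. ln (enn2real (RN_deriv Q P x)))"
  shows "(\<integral>\<^sup>+x. ennreal (max 0 (ln (enn2real (RN_deriv Q P x)))) \<partial>P) = \<infinity>"
proof -
  define h where "h x = ln (enn2real (RN_deriv Q P x))" for x
  have [measurable]: "h \<in> borel_measurable P"
    unfolding h_def[abs_def] by (simp add: measurable_cong_sets[OF sets_eq])
  have "(\<integral>\<^sup>+x. ennreal (max 0 (h x)) \<partial>P) = \<infinity>"
  proof (rule ccontr)
    assume "(\<integral>\<^sup>+x. ennreal (max 0 (h x)) \<partial>P) \<noteq> \<infinity>"
    moreover have "(\<integral>\<^sup>+x. ennreal (max 0 (- h x)) \<partial>P) \<noteq> \<infinity>"
      using nn_integral_neg_log_RN_deriv_le_1[OF P Q sets_eq ac] by (auto simp: h_def top_unique)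
    ultimately have "(\<integral>\<^sup>+x. ennreal (max 0 (h x)) + ennreal (max 0 (- h x)) \<partial>P) < \<infinity>"
      by (subst nn_integral_add) (auto simp: less_top)
    also have "(\<lambda>x. ennreal (max 0 (h x)) + ennreal (max 0 (- h x))) = (\<lambda>x. ennreal (norm (h x)))"
      by (auto simp: max_def ennreal_plus[symmetric] simp del: ennreal_plus)
    finally have "integrable P h" by (intro integrableI_bounded) auto
    with h_not_int show False by (simp add: h_def[abs_def])
  qed
  then show ?thesis by (simp add: h_def)
qed

lemma exists_bounded_donsker_varadhan_gt_if_not_ac:
  assumes P: "prob_space P" and Q: "prob_space Q" and sets_eq: "sets P = sets Q"
    and not_ac: "\<not> absolutely_continuous Q P"
  shows "\<exists>g B. g \<in> borel_measurable Q \<and> (\<forall>x. \<bar>g x\<bar> \<le> B) \<and> c < donsker_varadhan P Q g"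
proof -
  interpret P: prob_space P by fact
  obtain A where A: "A \<in> null_sets Q" "A \<notin> null_sets P"
    using not_ac unfolding absolutely_continuous_def by blast
  then have AP: "A \<in> sets P" and AQ: "A \<in> sets Q" using sets_eq by auto
  have qA: "measure Q A = 0" using A(1) by (simp add: measure_def null_sets_def)
  have pA: "0 < measure P A"
  proof -
    have "emeasure P A \<noteq> 0" using A AP by (simp add: null_sets_def)
    then show ?thesis by (simp add: P.emeasure_eq_measure zero_less_measure_iff)
  qed
  define t where "t = (\<bar>c\<bar> + 1) / measure P A"
  have "donsker_varadhan P Q (\<lambda>x. t * indicator A x) = t * measure P A"
    using qA by (simp add: donsker_varadhan_indicator[OF P Q sets_eq AP])
  also have "\<dots> = \<bar>c\<bar> + 1" using pA by (simp add: t_def)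
  finally have "c < donsker_varadhan P Q (\<lambda>x. t * indicator A x)" by simp
  moreover have "\<bar>t * indicator A x\<bar> \<le> \<bar>t\<bar>" for x by (simp add: indicator_def)
  ultimately show ?thesis
    using AQ by (intro exI[of _ "\<lambda>x. t * indicator A x"] exI[of _ "\<bar>t\<bar>"]) auto
qed

lemma exp_le_add_exp_of_le_max_ln:
  fixes y u L :: real
  assumes "0 \<le> y" and "y = 0 \<Longrightarrow> u \<le> L" and "y \<noteq> 0 \<Longrightarrow> u \<le> max L (ln y)"
  shows "exp u \<le> y + exp L"
proof (cases "y = 0")
  case False
  then have "0 < y" using assms(1) by simp
  have "exp u \<le> exp (max L (ln y))" using assms(3)[OF False] by simp
  also have "\<dots> \<le> y + exp L" using \<open>0 < y\<close> by (simp add: max_def)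
  finally show ?thesis .
qed (use assms(2) in simp)

lemma exists_bounded_donsker_varadhan_gt_if_integrable:
  assumes P: "prob_space P" and Q: "prob_space Q" and sets_eq: "sets P = sets Q"
    and ac: "absolutely_continuous Q P"
    and h_int: "integrable P (\<lambda>x. ln (enn2real (RN_deriv Q P x)))"
    and c: "c < (\<integral>x. ln (enn2real (RN_deriv Q P x)) \<partial>P)"
  shows "\<exists>g B. g \<in> borel_measurable Q \<and> (\<forall>x. \<bar>g x\<bar> \<le> B) \<and> c < donsker_varadhan P Q g"
proof -
  define F where "F x = enn2real (RN_deriv Q P x)" for x
  define g where "g M x = (if F x = 0 then - real M else max (- real M) (min (real M) (ln (F x))))"
    for M :: nat and x
  have F[measurable]: "F \<in> borel_measurable Q" unfolding F_def[abs_def] by measurable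
  have g[measurable]: "g M \<in> borel_measurable Q" for M unfolding g_def by measurable
  have gP[measurable]: "g M \<in> borel_measurable P" for M
    using g by (simp add: measurable_cong_sets[OF sets_eq])
  have g_bnd: "\<bar>g M x\<bar> \<le> real M" for M x by (auto simp: g_def)
  have "exp (g M x) \<le> F x + exp (- real M)" for M x
    by (rule exp_le_add_exp_of_le_max_ln) (auto simp: g_def F_def)
  then have DV_ge: "(\<integral>x. g M x \<partial>P) - exp (- real M) \<le> donsker_varadhan P Q (g M)" for M
    by (intro donsker_varadhan_ge[OF P Q sets_eq ac g g_bnd]) (simp add: F_def)
  have "(\<lambda>M. \<integral>x. g M x \<partial>P) \<longlonglongrightarrow> (\<integral>x. ln (F x) \<partial>P)"
  proof (rule integral_dominated_convergence[where w="\<lambda>x. \<bar>ln (F x)\<bar>"])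
    show "AE x in P. (\<lambda>M. g M x) \<longlonglongrightarrow> ln (F x)"
      using AE_RN_deriv_pos[OF P Q sets_eq ac]
    proof eventually_elim
      case (elim x)
      obtain N :: nat where "\<bar>ln (F x)\<bar> \<le> real N" using real_arch_simple by blast
      then have "\<forall>M\<ge>N. g M x = ln (F x)" using elim by (auto simp: g_def F_def)
      then show ?case by (intro tendsto_eventually eventually_sequentiallyI[of N]) auto
    qed
    show "AE x in P. norm (g M x) \<le> \<bar>ln (F x)\<bar>" for M
      using AE_RN_deriv_pos[OF P Q sets_eq ac] by eventually_elim (auto simp: g_def F_def)
  qed (use h_int in \<open>simp_all add: F_def\<close>)
  moreover have "(\<lambda>M. exp (- real M)) \<longlonglongrightarrow> 0"
    by (rule filterlim_compose[OF exp_at_bot])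
       (simp add: filterlim_uminus_at_bot filterlim_real_sequentially)
  ultimately have "(\<lambda>M. (\<integral>x. g M x \<partial>P) - exp (- real M)) \<longlonglongrightarrow> (\<integral>x. ln (F x) \<partial>P) - 0"
    by (rule tendsto_diff)
  then obtain M where "c < (\<integral>x. g M x \<partial>P) - exp (- real M)"
    using order_tendstoD(1)[of _ _ sequentially c] c by (force simp: F_def eventually_sequentially)
  then have "c < donsker_varadhan P Q (g M)" using DV_ge[of M] by linarith
  then show ?thesis using g g_bnd by blast
qed

lemma exists_bounded_donsker_varadhan_gt_if_not_integrable:
  assumes P: "prob_space P" and Q: "prob_space Q" and sets_eq: "sets P = sets Q"
    and ac: "absolutely_continuous Q P"
    and h_not_int: "\<not> integrable P (\<lambda>x. ln (enn2real (RN_deriv Q P x)))"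
  shows "\<exists>g B. g \<in> borel_measurable Q \<and> (\<forall>x. \<bar>g x\<bar> \<le> B) \<and> c < donsker_varadhan P Q g"
proof -
  interpret P: prob_space P by fact
  define F where "F x = enn2real (RN_deriv Q P x)" for x
  define g where "g M x = (if F x = 0 then 0 else max 0 (min (real M) (ln (F x))))" for M :: nat and x
  have F[measurable]: "F \<in> borel_measurable Q" unfolding F_def[abs_def] by measurable
  have FP[measurable]: "F \<in> borel_measurable P" using F by (simp add: measurable_cong_sets[OF sets_eq])
  have g[measurable]: "g M \<in> borel_measurable Q" for M unfolding g_def by measurable
  have gP[measurable]: "g M \<in> borel_measurable P" for M
    using g by (simp add: measurable_cong_sets[OF sets_eq])
  have g_bnd: "\<bar>g M x\<bar> \<le> real M" and g_nonneg: "0 \<le> g M x" for M x by (auto simp: g_def)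
  have "exp (g M x) \<le> F x + exp 0" for M x
    by (rule exp_le_add_exp_of_le_max_ln) (auto simp: g_def F_def)
  then have DV_ge: "(\<integral>x. g M x \<partial>P) - 1 \<le> donsker_varadhan P Q (g M)" for M
    using donsker_varadhan_ge[OF P Q sets_eq ac g g_bnd, where L=0] by (simp add: F_def)
  have pos_inf: "(\<integral>\<^sup>+x. ennreal (max 0 (ln (F x))) \<partial>P) = \<infinity>"
    unfolding F_def by (rule nn_integral_pos_log_RN_deriv_eq_infinity[OF P Q sets_eq ac h_not_int])
  have "(\<lambda>M. \<integral>\<^sup>+x. ennreal (min (real M) (max 0 (ln (F x)))) \<partial>P)
      \<longlonglongrightarrow> (\<integral>\<^sup>+x. ennreal (max 0 (ln (F x))) \<partial>P)"
  proof (rule nn_integral_LIMSEQ)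
    show "incseq (\<lambda>M x. ennreal (min (real M) (max 0 (ln (F x)))))"
      by (auto simp: incseq_def le_fun_def intro!: ennreal_leI)
    fix x
    obtain N :: nat where "\<bar>ln (F x)\<bar> \<le> real N" using real_arch_simple by blast
    then have "\<forall>M\<ge>N. ennreal (min (real M) (max 0 (ln (F x)))) = ennreal (max 0 (ln (F x)))" by auto
    then show "(\<lambda>M. ennreal (min (real M) (max 0 (ln (F x))))) \<longlonglongrightarrow> ennreal (max 0 (ln (F x)))"
      by (intro tendsto_eventually eventually_sequentiallyI[of N]) auto
  qed auto
  then obtain M where M: "ennreal (\<bar>c\<bar> + 1) < (\<integral>\<^sup>+x. ennreal (min (real M) (max 0 (ln (F x)))) \<partial>P)"
    unfolding pos_inf using order_tendstoD(1)[of _ _ sequentially "ennreal (\<bar>c\<bar> + 1)"]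
    by (force simp: eventually_sequentially)
  have "(\<integral>\<^sup>+x. ennreal (min (real M) (max 0 (ln (F x)))) \<partial>P) = (\<integral>\<^sup>+x. ennreal (g M x) \<partial>P)"
    using AE_RN_deriv_pos[OF P Q sets_eq ac] by (intro nn_integral_cong_AE) (auto simp: g_def F_def)
  also have "\<dots> = ennreal (\<integral>x. g M x \<partial>P)"
    using g_bnd g_nonneg
    by (intro nn_integral_eq_integral P.integrable_const_bound[where B="real M"]) auto
  finally have "ennreal (\<bar>c\<bar> + 1) < ennreal (\<integral>x. g M x \<partial>P)" using M by (simp only:)
  then have "\<bar>c\<bar> + 1 < (\<integral>x. g M x \<partial>P)" by (subst (asm) ennreal_less_iff) auto
  then have "c < donsker_varadhan P Q (g M)" using DV_ge[of M] by linarith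
  then show ?thesis using g g_bnd by blast
qed

lemma exists_bounded_donsker_varadhan_gt:
  assumes P: "prob_space P" and Q: "prob_space Q" and sets_eq: "sets P = sets Q"
    and c: "ereal c < rel_entropy P Q"
  shows "\<exists>g B. g \<in> borel_measurable Q \<and> (\<forall>x. \<bar>g x\<bar> \<le> B) \<and> c < donsker_varadhan P Q g"
proof (cases "absolutely_continuous Q P")
  case ac: True
  show ?thesis
  proof (cases "integrable P (\<lambda>x. ln (enn2real (RN_deriv Q P x)))")
    case True
    with c ac show ?thesis
      by (intro exists_bounded_donsker_varadhan_gt_if_integrable[OF P Q sets_eq ac True]) (simp add: rel_entropy_def)
  qed (rule exists_bounded_donsker_varadhan_gt_if_not_integrable[OF P Q sets_eq ac])
qed (rule exists_bounded_donsker_varadhan_gt_if_not_ac[OF P Q sets_eq])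

lemma abs_exp_diff_le:
  fixes x y M :: real
  assumes "x \<le> M" "y \<le> M"
  shows "\<bar>exp x - exp y\<bar> \<le> exp M * \<bar>x - y\<bar>"
proof -
  have "exp u - exp v \<le> exp M * (u - v)" if "v \<le> u" "u \<le> M" for u v :: real
  proof -
    have "exp u - exp v = exp u * (1 - exp (v - u))" by (simp add: exp_diff field_simps)
    also have "\<dots> \<le> exp u * (u - v)"
    proof (rule mult_left_mono)
      have "1 + (v - u) \<le> exp (v - u)" by (rule exp_ge_add_one_self)
      then show "1 - exp (v - u) \<le> u - v" by linarith
    qed simp
    also have "\<dots> \<le> exp M * (u - v)" using that by (intro mult_right_mono) auto
    finally show ?thesis .
  qed
  from this[of y x] this[of x y] assms show ?thesis by (cases "y \<le> x") (auto simp: abs_if)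
qed

lemma ln_diff_le:
  fixes x y c M :: real
  assumes x: "exp (- M) \<le> x" and y: "0 < y" and yx: "y - x \<le> c" and c: "0 \<le> c"
  shows "ln y - ln x \<le> exp M * c"
proof -
  have x_pos: "0 < x" using x exp_gt_zero[of "- M"] by linarith
  then have "ln y - ln x \<le> y / x - 1" using y ln_le_minus_one[of "y / x"] by (simp add: ln_div)
  also have "\<dots> = (y - x) / x" using x_pos by (simp add: field_simps)
  also have "\<dots> \<le> c * (1 / x)" using x_pos yx by (simp add: divide_right_mono)
  also have "\<dots> \<le> c * exp M"
    using x x_pos c divide_left_mono[OF x, of 1]
    by (intro mult_left_mono) (auto simp: exp_minus inverse_eq_divide)
  finally show ?thesis by (simp add: mult.commute)
qed

lemma donsker_varadhan_diff_le:
  assumes P: "prob_space P" and Q: "prob_space Q" and sets_eq: "sets P = sets Q"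
    and g1[measurable]: "g1 \<in> borel_measurable Q" and g2[measurable]: "g2 \<in> borel_measurable Q"
    and b1: "\<And>x. \<bar>g1 x\<bar> \<le> M" and b2: "\<And>x. \<bar>g2 x\<bar> \<le> M"
  shows "donsker_varadhan P Q g1 - donsker_varadhan P Q g2
           \<le> (\<integral>x. \<bar>g1 x - g2 x\<bar> \<partial>P) + exp (2 * M) * (\<integral>x. \<bar>g1 x - g2 x\<bar> \<partial>Q)"
proof -
  interpret P: prob_space P by fact
  interpret Q: prob_space Q by fact
  have [measurable]: "g1 \<in> borel_measurable P" "g2 \<in> borel_measurable P"
    by (simp_all add: measurable_cong_sets[OF sets_eq])
  have bnd: "g1 x \<le> M" "- M \<le> g1 x" "g2 x \<le> M" "- M \<le> g2 x" for x
    using b1[of x] b2[of x] by auto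
  have int_P: "integrable P g1" "integrable P g2"
    by (auto intro!: P.integrable_const_bound[where B=M] b1 b2)
  note int_Q = integrable_exp_bounded[OF Q g1 b1] integrable_exp_bounded[OF Q g2 b2]
  have "\<bar>g1 x - g2 x\<bar> \<le> 2 * M" for x using bnd[of x] by arith
  then have int_abs: "integrable Q (\<lambda>x. \<bar>g1 x - g2 x\<bar>)"
    by (intro Q.integrable_const_bound[where B="2 * M"] AE_I2) auto
  have "(\<integral>x. g1 x \<partial>P) - (\<integral>x. g2 x \<partial>P) = (\<integral>x. g1 x - g2 x \<partial>P)" using int_P by simp
  also have "\<dots> \<le> (\<integral>x. \<bar>g1 x - g2 x\<bar> \<partial>P)" using int_P by (intro integral_mono) auto
  finally have "(\<integral>x. g1 x \<partial>P) - (\<integral>x. g2 x \<partial>P) \<le> (\<integral>x. \<bar>g1 x - g2 x\<bar> \<partial>P)" .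
  moreover have "ln (\<integral>x. exp (g2 x) \<partial>Q) - ln (\<integral>x. exp (g1 x) \<partial>Q)
      \<le> exp M * (exp M * (\<integral>x. \<bar>g1 x - g2 x\<bar> \<partial>Q))"
  proof (rule ln_diff_le[OF exp_neg_le_integral_exp[OF Q g1 b1]])
    show "0 < (\<integral>x. exp (g2 x) \<partial>Q)"
      using exp_neg_le_integral_exp[OF Q g2 b2] exp_gt_zero[of "- M"] by linarith
    have "(\<integral>x. exp (g2 x) \<partial>Q) - (\<integral>x. exp (g1 x) \<partial>Q) = (\<integral>x. exp (g2 x) - exp (g1 x) \<partial>Q)"
      using int_Q by simp
    also have "\<dots> \<le> (\<integral>x. exp M * \<bar>g1 x - g2 x\<bar> \<partial>Q)"
      using int_Q int_abs abs_exp_diff_le[OF bnd(3,1)]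
      by (intro integral_mono) (auto simp: abs_minus_commute abs_le_iff)
    finally show "(\<integral>x. exp (g2 x) \<partial>Q) - (\<integral>x. exp (g1 x) \<partial>Q) \<le> exp M * (\<integral>x. \<bar>g1 x - g2 x\<bar> \<partial>Q)"
      by simp
  qed simp
  moreover have "exp M * (exp M * (\<integral>x. \<bar>g1 x - g2 x\<bar> \<partial>Q)) = exp (2 * M) * (\<integral>x. \<bar>g1 x - g2 x\<bar> \<partial>Q)"
    by (simp add: mult.assoc[symmetric] mult_exp_exp)
  ultimately show ?thesis unfolding donsker_varadhan_def by linarith
qed

text \<open>Rational step functions on sets from \<open>C\<close>: a countable family of bounded test functions in
  which the Donsker--Varadhan supremum can be taken.\<close>

definition step_test_funs :: "'a set set \<Rightarrow> ('a \<Rightarrow> real) set" where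
  "step_test_funs C = (\<lambda>(c, d, Bs) x. c + d * (\<Sum>B\<leftarrow>Bs. indicator B x)) ` (\<rat> \<times> \<rat> \<times> lists C)"

lemma countable_step_test_funs: "countable C \<Longrightarrow> countable (step_test_funs C)"
  unfolding step_test_funs_def by (intro countable_image countable_SIGMA countable_rat countable_lists)

lemma step_test_funsE:
  assumes "g \<in> step_test_funs C"
  obtains c d Bs where "g = (\<lambda>x. c + d * (\<Sum>B\<leftarrow>Bs. indicator B x))" "set Bs \<subseteq> C"
  using assms unfolding step_test_funs_def by (auto simp: lists_eq_set)

lemma step_test_funs_measurable:
  assumes "C \<subseteq> sets M" "g \<in> step_test_funs C"
  shows "g \<in> borel_measurable M"
proof -
  have "(\<lambda>x. \<Sum>B\<leftarrow>Bs. indicator B x :: real) \<in> borel_measurable M" if "set Bs \<subseteq> sets M" for Bs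
    using that by (induction Bs) auto
  with assms show ?thesis by (elim step_test_funsE) auto
qed

lemma step_test_funs_bounded:
  assumes "g \<in> step_test_funs C"
  shows "\<exists>B. \<forall>x. \<bar>g x\<bar> \<le> B"
proof -
  obtain c d Bs where g: "g = (\<lambda>x. c + d * (\<Sum>B\<leftarrow>Bs. indicator B x))"
    using assms by (elim step_test_funsE)
  have "\<bar>g x\<bar> \<le> \<bar>c\<bar> + \<bar>d\<bar> * length Bs" for x
  proof -
    let ?s = "\<Sum>B\<leftarrow>Bs. indicator B x :: real"
    have "0 \<le> ?s" by (induction Bs) auto
    moreover have "?s \<le> length Bs" by (induction Bs) (auto simp: indicator_def)
    ultimately have "\<bar>d * ?s\<bar> \<le> \<bar>d\<bar> * length Bs" by (simp add: abs_mult mult_left_mono)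
    then show ?thesis unfolding g using abs_triangle_ineq[of c "d * ?s"] by linarith
  qed
  then show ?thesis by blast
qed

lemma step_fun_in_step_test_funs:
  fixes B :: "nat \<Rightarrow> 'a set" and N :: nat
  assumes "c \<in> \<rat>" "d \<in> \<rat>" "\<And>i. B i \<in> C"
  shows "(\<lambda>x. c + d * (\<Sum>i=1..N. indicator (B i) x)) \<in> step_test_funs C"
proof -
  have "(\<Sum>B\<leftarrow>map B [1..<Suc N]. indicator B x) = (\<Sum>i=1..N. indicator (B i) x :: real)" for x
    by (simp only: map_map comp_def sum_set_upt_conv_sum_list_nat[symmetric] set_upt
        atLeastLessThanSuc_atLeastAtMost)
  then show ?thesis
    unfolding step_test_funs_def using assms
    by (intro image_eqI[where x="(c, d, map B [1..<Suc N])"]) (auto simp: fun_eq_iff)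
qed

lemma abs_step_fun_le:
  fixes M d :: real
  assumes d: "0 < d" and N: "- M + real N * d = M"
  shows "\<bar>- M + d * (\<Sum>i=1..N. indicator (B i) x)\<bar> \<le> M"
proof -
  have "(\<Sum>i=1..N. indicator (B i) x :: real) \<le> (\<Sum>i=1..N. 1)"
    by (intro sum_mono) (simp add: indicator_def)
  then have "d * (\<Sum>i=1..N. indicator (B i) x) \<le> d * real N"
    using d by (intro mult_left_mono) auto
  moreover have "0 \<le> d * (\<Sum>i=1..N. indicator (B i) x :: real)"
    using d by (simp add: sum_nonneg)
  moreover have "d * real N = 2 * M" using N by (simp add: mult.commute)
  ultimately show ?thesis by (simp add: abs_le_iff)
qed

lemma staircase_step_fun_approx:
  fixes g :: "'a \<Rightarrow> real" and M d :: real
  assumes d: "0 < d" and N: "- M + real N * d = M" and g: "\<bar>g x\<bar> \<le> M"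
  defines "A i \<equiv> {y. - M + real i * d \<le> g y}"
  shows "\<bar>g x - (- M + d * (\<Sum>i=1..N. indicator (B i) x))\<bar>
    \<le> d + d * (\<Sum>i=1..N. indicator (sym_diff (A i) (B i)) x)"
proof -
  define s where "s = - M + d * (\<Sum>i=1..N. indicator (A i) x)"
  have "s \<le> g x \<and> g x \<le> s + d"
    using staircase_approx[OF d, of "- M" "g x" N] g N by (simp add: s_def A_def indicator_def abs_le_iff)
  moreover have "\<bar>s - (- M + d * (\<Sum>i=1..N. indicator (B i) x))\<bar>
      \<le> d * (\<Sum>i=1..N. indicator (sym_diff (A i) (B i)) x)"
  proof -
    have "\<bar>s - (- M + d * (\<Sum>i=1..N. indicator (B i) x))\<bar>
        = d * \<bar>\<Sum>i=1..N. indicator (A i) x - indicator (B i) x :: real\<bar>"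
      using d by (simp add: s_def sum_subtractf abs_mult flip: right_diff_distrib)
    also have "\<dots> \<le> d * (\<Sum>i=1..N. \<bar>indicator (A i) x - indicator (B i) x :: real\<bar>)"
      using d by (intro mult_left_mono sum_abs) auto
    also have "(\<Sum>i=1..N. \<bar>indicator (A i) x - indicator (B i) x :: real\<bar>)
        = (\<Sum>i=1..N. indicator (sym_diff (A i) (B i)) x)"
      by (intro sum.cong) (auto simp: indicator_def)
    finally show ?thesis .
  qed
  ultimately show ?thesis by linarith
qed

lemma integral_abs_diff_step_fun_le:
  fixes g :: "'a::topological_space \<Rightarrow> real" and M d :: real
  assumes R: "prob_space R" "sets R = sets borel"
    and g[measurable]: "g \<in> borel_measurable borel" and g_bnd: "\<And>x. \<bar>g x\<bar> \<le> M"
    and B[measurable]: "\<And>i. B i \<in> sets borel"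
    and d: "0 < d" and N: "- M + real N * d = M"
  shows "(\<integral>x. \<bar>g x - (- M + d * (\<Sum>i=1..N. indicator (B i) x))\<bar> \<partial>R)
    \<le> d + d * (\<Sum>i=1..N. measure R (sym_diff {x. - M + real i * d \<le> g x} (B i)))"
proof -
  interpret R: prob_space R by fact
  define D where "D i = sym_diff {x. - M + real i * d \<le> g x} (B i)" for i
  have [measurable]: "g \<in> borel_measurable R" "\<And>i. B i \<in> sets R" "\<And>i. D i \<in> sets R"
    unfolding D_def by (simp_all add: measurable_cong_sets[OF R(2) refl] R(2))
  have int_D: "integrable R (indicator (D i) :: _ \<Rightarrow> real)" for i
    by (simp add: R.emeasure_finite less_top[symmetric])
  have "\<bar>g x - (- M + d * (\<Sum>i=1..N. indicator (B i) x))\<bar> \<le> 2 * M" for x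
    using g_bnd[of x] abs_step_fun_le[OF d N, of B x] by arith
  then have "integrable R (\<lambda>x. \<bar>g x - (- M + d * (\<Sum>i=1..N. indicator (B i) x))\<bar>)"
    by (intro R.integrable_const_bound[where B="2 * M"] AE_I2) auto
  moreover have "\<bar>g x - (- M + d * (\<Sum>i=1..N. indicator (B i) x))\<bar> \<le> d + d * (\<Sum>i=1..N. indicator (D i) x)"
    for x using staircase_step_fun_approx[where g=g and B=B, OF d N g_bnd[of x]] by (simp add: D_def)
  ultimately have "(\<integral>x. \<bar>g x - (- M + d * (\<Sum>i=1..N. indicator (B i) x))\<bar> \<partial>R)
      \<le> (\<integral>x. d + d * (\<Sum>i=1..N. indicator (D i) x) \<partial>R)"
    using int_D by (intro integral_mono) auto
  also have "\<dots> = d + d * (\<Sum>i=1..N. measure R (D i))"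
    using int_D by (simp add: R.prob_space)
  finally show ?thesis by (simp add: D_def)
qed

lemma step_test_funs_L1_approx:
  fixes P Q :: "'a::polish_space measure"
  assumes P: "prob_space P" "sets P = sets borel" and Q: "prob_space Q" "sets Q = sets borel"
    and BB: "topological_basis BB" "countable BB"
    and g[measurable]: "g \<in> borel_measurable borel" and g_bnd: "\<And>x. \<bar>g x\<bar> \<le> real M"
    and \<delta>: "0 < \<delta>"
  obtains g' where "g' \<in> step_test_funs (finite_Unions BB)" "\<And>x. \<bar>g' x\<bar> \<le> real M"
    "(\<integral>x. \<bar>g x - g' x\<bar> \<partial>P) \<le> \<delta>" "(\<integral>x. \<bar>g x - g' x\<bar> \<partial>Q) \<le> \<delta>"
proof -
  obtain m :: nat where m: "2 / \<delta> < real m" using reals_Archimedean2 by blast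
  define d where "d = 1 / (real m + 1)"
  define N where "N = 2 * M * (m + 1)"
  have d: "0 < d" and N: "- real M + real N * d = real M" by (simp_all add: d_def N_def field_simps)
  have "2 * d \<le> \<delta>" using m \<delta> by (simp add: d_def field_simps)
  \<comment> \<open>level sets of the staircase below \<open>g\<close>, each replaced by a nearby finite union of basis sets\<close>
  define A where "A i = {x. - real M + real i * d \<le> g x}" for i :: nat
  have A[measurable]: "A i \<in> sets borel" for i unfolding A_def by measurable
  define \<eta> where "\<eta> = 1 / (real N + 1)"
  have "\<exists>B. B \<in> finite_Unions BB \<and> measure P (sym_diff (A i) B) < \<eta>
      \<and> measure Q (sym_diff (A i) B) < \<eta>" for i
    by (rule finite_Unions_approx[OF prob_space.finite_measure[OF P(1)] P(2)
        prob_space.finite_measure[OF Q(1)] Q(2) BB A]) (auto simp: \<eta>_def)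
  then obtain B where B: "\<And>i. B i \<in> finite_Unions BB"
    "\<And>i. measure P (sym_diff (A i) (B i)) < \<eta>" "\<And>i. measure Q (sym_diff (A i) (B i)) < \<eta>"
    by metis
  have B_sets: "B i \<in> sets borel" for i using open_finite_Unions[OF BB(1) B(1)] by auto
  have L1: "(\<integral>x. \<bar>g x - (- real M + d * (\<Sum>i=1..N. indicator (B i) x))\<bar> \<partial>R) \<le> \<delta>"
    if R: "prob_space R" "sets R = sets borel" "\<And>i. measure R (sym_diff (A i) (B i)) < \<eta>" for R
  proof -
    have "d * (\<Sum>i=1..N. measure R (sym_diff (A i) (B i))) \<le> d * (\<Sum>i=1..N. \<eta>)"
      using R(3) d by (intro mult_left_mono sum_mono less_imp_le) auto
    also have "\<dots> \<le> d" using d by (simp add: \<eta>_def field_simps)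
    finally show ?thesis
      using integral_abs_diff_step_fun_le[where B=B, OF R(1,2) g g_bnd B_sets d N] \<open>2 * d \<le> \<delta>\<close>
      unfolding A_def by linarith
  qed
  show ?thesis
  proof (rule that[OF _ _ L1[OF P B(2)] L1[OF Q B(3)]])
    show "(\<lambda>x. - real M + d * (\<Sum>i=1..N. indicator (B i) x)) \<in> step_test_funs (finite_Unions BB)"
      using B(1) by (intro step_fun_in_step_test_funs) (simp_all add: d_def)
  qed (rule abs_step_fun_le[OF d N])
qed

lemma exists_step_test_fun_donsker_varadhan_gt:
  fixes P Q :: "'a::polish_space measure"
  assumes P: "prob_space P" "sets P = sets borel" and Q: "prob_space Q" "sets Q = sets borel"
    and BB: "topological_basis BB" "countable BB"
    and g[measurable]: "g \<in> borel_measurable borel" and bnd: "\<And>x. \<bar>g x\<bar> \<le> B" and e: "0 < e"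
  shows "\<exists>g'\<in>step_test_funs (finite_Unions BB). donsker_varadhan P Q g - e < donsker_varadhan P Q g'"
proof -
  define M where "M = nat \<lceil>B\<rceil>"
  have gM: "\<bar>g x\<bar> \<le> real M" for x
    unfolding M_def by (rule order_trans[OF bnd real_nat_ceiling_ge])
  define X where "X = 1 + exp (2 * real M)"
  have X: "0 < X" by (simp add: X_def add_pos_pos)
  define \<delta> where "\<delta> = e / (2 * X)"
  have \<delta>: "0 < \<delta>" using e X by (simp add: \<delta>_def)
  obtain g' where g': "g' \<in> step_test_funs (finite_Unions BB)" "\<And>x. \<bar>g' x\<bar> \<le> real M"
    "(\<integral>x. \<bar>g x - g' x\<bar> \<partial>P) \<le> \<delta>" "(\<integral>x. \<bar>g x - g' x\<bar> \<partial>Q) \<le> \<delta>"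
    using step_test_funs_L1_approx[OF P Q BB g gM \<delta>] by blast
  have g'_meas: "g' \<in> borel_measurable Q"
    using open_finite_Unions[OF BB(1)] Q(2) by (intro step_test_funs_measurable[OF _ g'(1)]) auto
  have "donsker_varadhan P Q g - donsker_varadhan P Q g'
      \<le> (\<integral>x. \<bar>g x - g' x\<bar> \<partial>P) + exp (2 * real M) * (\<integral>x. \<bar>g x - g' x\<bar> \<partial>Q)"
    using P Q gM g' g'_meas
    by (intro donsker_varadhan_diff_le) (auto simp: measurable_cong_sets[OF Q(2) refl])
  also have "\<dots> \<le> \<delta> + exp (2 * real M) * \<delta>"
    using g' by (intro add_mono mult_left_mono) auto
  also have "\<dots> = \<delta> * X" by (simp add: X_def algebra_simps)
  also have "\<dots> = e / 2" using X by (simp add: \<delta>_def)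
  also have "\<dots> < e" using e by simp
  finally show ?thesis using g'(1) by (intro bexI[of _ g']) auto
qed

lemma rel_entropy_eq_SUP_step_test_funs:
  fixes P Q :: "'a::polish_space measure"
  assumes P: "prob_space P" "sets P = sets borel" and Q: "prob_space Q" "sets Q = sets borel"
    and BB: "topological_basis BB" "countable BB"
  shows "rel_entropy P Q = (SUP g\<in>step_test_funs (finite_Unions BB). ereal (donsker_varadhan P Q g))"
proof (rule antisym)
  have sets_eq: "sets P = sets Q" using P Q by simp
  have test_meas: "g \<in> borel_measurable Q" if "g \<in> step_test_funs (finite_Unions BB)" for g
    using open_finite_Unions[OF BB(1)] Q(2) by (intro step_test_funs_measurable[OF _ that]) auto
  show "rel_entropy P Q \<le> (SUP g\<in>step_test_funs (finite_Unions BB). ereal (donsker_varadhan P Q g))"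
  proof (rule dense_le)
    fix y assume y: "y < rel_entropy P Q"
    show "y \<le> (SUP g\<in>step_test_funs (finite_Unions BB). ereal (donsker_varadhan P Q g))"
    proof (cases y)
      case (real c)
      obtain g B where g: "g \<in> borel_measurable Q" "\<And>x. \<bar>g x\<bar> \<le> B" "c < donsker_varadhan P Q g"
        using exists_bounded_donsker_varadhan_gt[OF P(1) Q(1) sets_eq] y real by blast
      have gb: "g \<in> borel_measurable borel" using g(1) by (simp add: measurable_cong_sets[OF Q(2) refl])
      obtain g' where "g' \<in> step_test_funs (finite_Unions BB)"
        "donsker_varadhan P Q g - (donsker_varadhan P Q g - c) < donsker_varadhan P Q g'"
        using exists_step_test_fun_donsker_varadhan_gt[OF P Q BB gb g(2), where e="donsker_varadhan P Q g - c"] g(3)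
        by auto
      then show ?thesis using real by (intro SUP_upper2[of g']) auto
    qed (use y in auto)
  qed
  show "(SUP g\<in>step_test_funs (finite_Unions BB). ereal (donsker_varadhan P Q g)) \<le> rel_entropy P Q"
  proof (rule SUP_least)
    fix g assume g: "g \<in> step_test_funs (finite_Unions BB)"
    then obtain B where "\<forall>x. \<bar>g x\<bar> \<le> B" using step_test_funs_bounded by blast
    then show "ereal (donsker_varadhan P Q g) \<le> rel_entropy P Q"
      by (intro donsker_varadhan_le_rel_entropy[OF P(1) Q(1) sets_eq test_meas[OF g]]) auto
  qed
qed

lemma measurable_rel_entropy:
  fixes K L :: "'b \<Rightarrow> 'a::polish_space measure"
  assumes K: "K \<in> M \<rightarrow>\<^sub>M prob_algebra borel" and L: "L \<in> M \<rightarrow>\<^sub>M prob_algebra borel"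
  shows "(\<lambda>x. rel_entropy (K x) (L x)) \<in> borel_measurable M"
proof -
  obtain BB :: "'a set set" where BB: "countable BB" "topological_basis BB"
    using ex_countable_basis by blast
  have K_sub: "K \<in> M \<rightarrow>\<^sub>M subprob_algebra borel" and L_sub: "L \<in> M \<rightarrow>\<^sub>M subprob_algebra borel"
    using K L by (auto intro: measurable_prob_algebraD)
  have "(\<lambda>x. SUP g\<in>step_test_funs (finite_Unions BB). ereal (donsker_varadhan (K x) (L x) g))
      \<in> borel_measurable M"
  proof (rule borel_measurable_SUP)
    show "countable (step_test_funs (finite_Unions BB))"
      by (intro countable_step_test_funs countable_finite_Unions BB(1))
    fix g assume "g \<in> step_test_funs (finite_Unions BB)"
    then have g[measurable]: "g \<in> borel_measurable borel"
      using open_finite_Unions[OF BB(2)] by (intro step_test_funs_measurable) auto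
    have "(\<lambda>x. \<integral>w. g w \<partial>K x) \<in> borel_measurable M"
      by (rule measurable_compose[OF K_sub integral_measurable_subprob_algebra]) simp
    moreover have "(\<lambda>x. \<integral>w. exp (g w) \<partial>L x) \<in> borel_measurable M"
      by (rule measurable_compose[OF L_sub integral_measurable_subprob_algebra]) simp
    ultimately show "(\<lambda>x. ereal (donsker_varadhan (K x) (L x) g)) \<in> borel_measurable M"
      unfolding donsker_varadhan_def by measurable
  qed
  then show ?thesis
  proof (rule measurable_cong[THEN iffD1, rotated])
    fix x assume x: "x \<in> space M"
    show "(SUP g\<in>step_test_funs (finite_Unions BB). ereal (donsker_varadhan (K x) (L x) g))
        = rel_entropy (K x) (L x)"
      using prob_algebra_kernel[OF K x] prob_algebra_kernel[OF L x] BB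
      by (intro rel_entropy_eq_SUP_step_test_funs[symmetric]) auto
  qed
qed

section \<open>Resampling one coordinate of an i.i.d. sample\<close>

lemma integral_measurable_subprob_algebra2:
  fixes f :: "'a \<Rightarrow> 'b \<Rightarrow> real"
  assumes f[measurable]: "(\<lambda>(x, y). f x y) \<in> borel_measurable (M \<Otimes>\<^sub>M N)"
    and L[measurable]: "L \<in> M \<rightarrow>\<^sub>M subprob_algebra N"
  shows "(\<lambda>x. \<integral>y. f x y \<partial>L x) \<in> borel_measurable M"
proof -
  note integral_measurable_subprob_algebra[measurable] measurable_distr2[measurable]
  have "(\<lambda>x. integral\<^sup>L (distr (L x) (M \<Otimes>\<^sub>M N) (\<lambda>y. (x, y))) (\<lambda>(x, y). f x y)) \<in> borel_measurable M"
    by measurable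
  then show ?thesis
    by (rule measurable_cong[THEN iffD1, rotated]) (simp add: integral_distr)
qed

lemma abs_integral_le_bound:
  fixes f :: "'a \<Rightarrow> real"
  assumes M: "prob_space M" and bnd: "\<And>x. x \<in> space M \<Longrightarrow> \<bar>f x\<bar> \<le> B"
  shows "\<bar>\<integral>x. f x \<partial>M\<bar> \<le> B"
proof (cases "integrable M f")
  case True
  interpret prob_space M by fact
  have "\<bar>\<integral>x. f x \<partial>M\<bar> \<le> (\<integral>x. \<bar>f x\<bar> \<partial>M)" by (rule integral_abs_bound)
  also have "\<dots> \<le> B" using True bnd by (intro integral_le_const AE_I2) auto
  finally show ?thesis .
next
  case False
  obtain x where "x \<in> space M" using prob_space.not_empty[OF M] by blast
  then show ?thesis using bnd[of x] False by (simp add: not_integrable_integral_eq)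
qed

lemma integral_PiM_insert:
  fixes H :: "('i \<Rightarrow> 'a) \<Rightarrow> real"
  assumes M: "\<And>k. k \<in> insert i I \<Longrightarrow> prob_space (M k)"
    and H: "integrable (PiM (insert i I) M) H"
  shows "(\<integral>\<omega>. H \<omega> \<partial>PiM (insert i I) M) = (\<integral>X. \<integral>x. H (X(i := x)) \<partial>M i \<partial>PiM I M)"
proof -
  interpret pair_sigma_finite "M i" "PiM I M"
    using M by (intro pair_sigma_finite.intro prob_space_imp_sigma_finite prob_space_PiM) auto
  let ?\<phi> = "\<lambda>(x, X). X(i := x)"
  have \<phi>: "?\<phi> \<in> M i \<Otimes>\<^sub>M PiM I M \<rightarrow>\<^sub>M PiM (insert i I) M"
    using measurable_compose[OF measurable_pair_swap' measurable_add_dim] by (simp add: case_prod_beta')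
  have distr: "distr (M i \<Otimes>\<^sub>M PiM I M) (PiM (insert i I) M) ?\<phi> = PiM (insert i I) M"
    using M by (intro distr_pair_PiM_eq_PiM) auto
  have Hm: "H \<in> borel_measurable (PiM (insert i I) M)" using H by (rule borel_measurable_integrable)
  have "integrable (M i \<Otimes>\<^sub>M PiM I M) (\<lambda>p. H (?\<phi> p))"
    using H by (simp add: integrable_distr_eq[OF \<phi> Hm, symmetric] distr)
  then have "integrable (M i \<Otimes>\<^sub>M PiM I M) (\<lambda>(x, X). H (X(i := x)))"
    by (simp add: case_prod_beta')
  then have "(\<integral>X. \<integral>x. H (X(i := x)) \<partial>M i \<partial>PiM I M) = (\<integral>p. H (?\<phi> p) \<partial>(M i \<Otimes>\<^sub>M PiM I M))"
    by (subst integral_snd) (simp_all add: case_prod_beta')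
  also have "\<dots> = (\<integral>\<omega>. H \<omega> \<partial>PiM (insert i I) M)"
    by (simp add: integral_distr[OF \<phi> Hm, symmetric] distr)
  finally show ?thesis ..
qed

lemma measurable_sample_dist_component: "j < n \<Longrightarrow> (\<lambda>s. s j) \<in> sample_dist n PZ \<rightarrow>\<^sub>M PZ"
  by (simp add: sample_dist_def)

lemma
  assumes j: "j < n"
  shows measurable_sample_dist_update:
      "(\<lambda>(s, z). s(j := z)) \<in> sample_dist n PZ \<Otimes>\<^sub>M PZ \<rightarrow>\<^sub>M sample_dist n PZ"
    and measurable_sample_dist_swap:
      "(\<lambda>(s, z). (s(j := z), s j)) \<in> sample_dist n PZ \<Otimes>\<^sub>M PZ \<rightarrow>\<^sub>M sample_dist n PZ \<Otimes>\<^sub>M PZ"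
proof -
  show upd: "(\<lambda>(s, z). s(j := z)) \<in> sample_dist n PZ \<Otimes>\<^sub>M PZ \<rightarrow>\<^sub>M sample_dist n PZ"
    using measurable_add_dim[of j "{0..<n}" "\<lambda>_. PZ"] j by (simp add: sample_dist_def insert_absorb)
  show "(\<lambda>(s, z). (s(j := z), s j)) \<in> sample_dist n PZ \<Otimes>\<^sub>M PZ \<rightarrow>\<^sub>M sample_dist n PZ \<Otimes>\<^sub>M PZ"
  proof -
    have "(\<lambda>p. ((fst p)(j := snd p), fst p j)) \<in> sample_dist n PZ \<Otimes>\<^sub>M PZ \<rightarrow>\<^sub>M sample_dist n PZ \<Otimes>\<^sub>M PZ"
      using upd measurable_compose[OF measurable_fst measurable_sample_dist_component[OF j]]
      by (intro measurable_Pair) (simp_all add: case_prod_beta')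
    then show ?thesis by (simp add: case_prod_beta')
  qed
qed

lemma integral_sample_dist_swap:
  fixes G :: "(nat \<Rightarrow> 'z) \<Rightarrow> 'z \<Rightarrow> real"
  assumes PZ: "prob_space PZ" and j: "j < n"
    and G[measurable]: "(\<lambda>(s, z). G s z) \<in> borel_measurable (sample_dist n PZ \<Otimes>\<^sub>M PZ)"
    and G_bnd: "\<And>s z. s \<in> space (sample_dist n PZ) \<Longrightarrow> z \<in> space PZ \<Longrightarrow> \<bar>G s z\<bar> \<le> B"
  shows "(\<integral>s. \<integral>z. G s z \<partial>PZ \<partial>sample_dist n PZ) = (\<integral>s. \<integral>z. G (s(j := z)) (s j) \<partial>PZ \<partial>sample_dist n PZ)"
proof -
  interpret PZ: prob_space PZ by fact
  interpret ZZ: pair_prob_space PZ PZ ..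
  define S where "S = sample_dist n PZ"
  define I where "I = {0..<n} - {j}"
  interpret S: prob_space S unfolding S_def sample_dist_def by (rule prob_space_PiM) (rule PZ)
  have S_insert: "S = PiM (insert j I) (\<lambda>_. PZ)"
    using j by (simp add: S_def sample_dist_def I_def insert_absorb)
  have upd: "(\<lambda>(s, z). s(j := z)) \<in> S \<Otimes>\<^sub>M PZ \<rightarrow>\<^sub>M S"
    unfolding S_def by (rule measurable_sample_dist_update[OF j])
  have G_swap: "(\<lambda>(s, z). G (s(j := z)) (s j)) \<in> borel_measurable (S \<Otimes>\<^sub>M PZ)"
    using measurable_compose[OF measurable_sample_dist_swap[OF j] G] by (simp add: S_def case_prod_beta')
  define H1 where "H1 s = (\<integral>z. G s z \<partial>PZ)" for s
  define H2 where "H2 s = (\<integral>z. G (s(j := z)) (s j) \<partial>PZ)" for s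
  have "H1 \<in> borel_measurable S" "H2 \<in> borel_measurable S"
    unfolding H1_def[abs_def] H2_def[abs_def] using G[folded S_def] G_swap
    by (auto intro: PZ.borel_measurable_lebesgue_integral)
  moreover have "\<bar>H1 s\<bar> \<le> B" "\<bar>H2 s\<bar> \<le> B" if s: "s \<in> space S" for s
  proof -
    have "s(j := z) \<in> space S" if "z \<in> space PZ" for z
      using measurable_space[OF upd, of "(s, z)"] s that by (simp add: space_pair_measure)
    then show "\<bar>H1 s\<bar> \<le> B" "\<bar>H2 s\<bar> \<le> B"
      unfolding H1_def H2_def using s measurable_space[OF measurable_sample_dist_component[OF j]]
      by (auto intro!: abs_integral_le_bound[OF PZ] G_bnd simp: S_def)
  qed
  ultimately have H_int: "integrable S H1" "integrable S H2"
    by (auto intro!: S.integrable_const_bound[where B=B] AE_I2)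
  have "(\<integral>x. H1 (X(j := x)) \<partial>PZ) = (\<integral>x. H2 (X(j := x)) \<partial>PZ)" if X: "X \<in> space (PiM I (\<lambda>_. PZ))" for X
  proof -
    have X_upd: "(\<lambda>x. X(j := x)) \<in> PZ \<rightarrow>\<^sub>M S"
      using measurable_compose[OF measurable_Pair[OF measurable_const[OF X] measurable_ident_sets[OF refl]]
          measurable_add_dim[of j I "\<lambda>_. PZ"]]
      by (simp add: S_insert)
    then have "(\<lambda>p. (X(j := fst p), snd p)) \<in> PZ \<Otimes>\<^sub>M PZ \<rightarrow>\<^sub>M S \<Otimes>\<^sub>M PZ"
      by (intro measurable_Pair) (auto intro: measurable_compose)
    from measurable_compose[OF this G[folded S_def]]
    have "integrable (PZ \<Otimes>\<^sub>M PZ) (\<lambda>(x, z). G (X(j := x)) z)"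
      using G_bnd measurable_space[OF X_upd]
      by (intro ZZ.integrable_const_bound[where B=B] AE_I2) (auto simp: case_prod_beta' space_pair_measure S_def)
    then show ?thesis
      by (simp add: H1_def H2_def ZZ.Fubini_integral)
  qed
  then have "(\<integral>s. H1 s \<partial>S) = (\<integral>s. H2 s \<partial>S)"
    using H_int unfolding S_insert by (simp add: integral_PiM_insert PZ cong: Bochner_Integration.integral_cong)
  then show ?thesis by (simp add: H1_def H2_def S_def)
qed

section \<open>Leave-one-out decomposition of the generalization gap\<close>

locale bounded_loss_learning =
  fixes n :: nat and PZ :: "'z measure" and PR :: "'r measure"
    and K :: "(nat \<Rightarrow> 'z) \<times> 'r \<Rightarrow> 'w::polish_space measure"
    and loss :: "'w \<Rightarrow> 'z \<Rightarrow> real" and a b :: real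
  assumes PZ: "prob_space PZ" and PR: "prob_space PR"
    and K_meas: "K \<in> sample_dist n PZ \<Otimes>\<^sub>M PR \<rightarrow>\<^sub>M prob_algebra borel"
    and loss_meas: "(\<lambda>(w, z). loss w z) \<in> borel_measurable (borel \<Otimes>\<^sub>M PZ)"
    and loss_bounded: "\<And>w z. a \<le> loss w z \<and> loss w z \<le> b"
begin

text \<open>In the notation of the paper, \<open>K (s, r)\<close> is \<open>P_{W|S=s,R=r}\<close>, \<open>SR\<close> is the law of \<open>(S, R)\<close>
  and \<open>loo j\<close> is the kernel \<open>P_{W|S^{-j},R}\<close>.\<close>

abbreviation SR :: "((nat \<Rightarrow> 'z) \<times> 'r) measure" where
  "SR \<equiv> sample_dist n PZ \<Otimes>\<^sub>M PR"

abbreviation loo :: "nat \<Rightarrow> (nat \<Rightarrow> 'z) \<times> 'r \<Rightarrow> 'w measure" where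
  "loo j sr \<equiv> loo_kernel PZ K j (fst sr) (snd sr)"

lemma prob_space_SR: "prob_space SR"
  using PZ PR unfolding sample_dist_def by (intro prob_space_pair prob_space_PiM)

lemma K_sub[measurable]: "K \<in> SR \<rightarrow>\<^sub>M subprob_algebra borel"
  using K_meas by (rule measurable_prob_algebraD)

lemma component_measurable[measurable]: "j < n \<Longrightarrow> (\<lambda>sr. fst sr j) \<in> SR \<rightarrow>\<^sub>M PZ"
  by (rule measurable_compose[OF measurable_fst measurable_sample_dist_component])

lemma loss_at_measurable[measurable]: "z \<in> space PZ \<Longrightarrow> (\<lambda>w. loss w z) \<in> borel_measurable borel"
  using measurable_compose[OF measurable_Pair[OF measurable_ident_sets[OF refl] measurable_const] loss_meas]
  by simp

lemma update_measurable:
  assumes "j < n"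
  shows "(\<lambda>(sr, z). ((fst sr)(j := z), snd sr)) \<in> SR \<Otimes>\<^sub>M PZ \<rightarrow>\<^sub>M SR"
proof -
  note measurable_sample_dist_update[OF assms, measurable]
  show ?thesis by measurable
qed

lemma loo_measurable:
  assumes "j < n"
  shows "(\<lambda>sr. loo j sr) \<in> SR \<rightarrow>\<^sub>M prob_algebra borel"
proof -
  have "(\<lambda>sr. PZ) \<in> SR \<rightarrow>\<^sub>M prob_algebra PZ"
    using PZ by (intro measurable_const) (auto simp: space_prob_algebra)
  moreover have "(\<lambda>(sr, z). K ((fst sr)(j := z), snd sr)) \<in> SR \<Otimes>\<^sub>M PZ \<rightarrow>\<^sub>M prob_algebra borel"
    using measurable_compose[OF update_measurable[OF assms] K_meas] by (simp add: case_prod_beta')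
  ultimately show ?thesis
    unfolding loo_kernel_def by (rule measurable_bind_prob_space2)
qed

lemma
  assumes "sr \<in> space SR"
  shows K_prob: "prob_space (K sr)" and sets_K: "sets (K sr) = sets borel"
  using prob_algebra_kernel[OF K_meas assms] by auto

lemma
  assumes "sr \<in> space SR" "j < n"
  shows loo_prob: "prob_space (loo j sr)" and sets_loo: "sets (loo j sr) = sets borel"
  using prob_algebra_kernel[OF loo_measurable assms(1)] assms(2) by auto

lemma abs_loss_le: "\<bar>loss w z\<bar> \<le> \<bar>a\<bar> + \<bar>b\<bar>"
  using loss_bounded[of w z] by arith

lemma integrable_SR:
  fixes f :: "(nat \<Rightarrow> 'z) \<times> 'r \<Rightarrow> real"
  assumes "f \<in> borel_measurable SR" "\<And>sr. sr \<in> space SR \<Longrightarrow> \<bar>f sr\<bar> \<le> B"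
  shows "integrable SR f"
proof -
  interpret prob_space SR by (rule prob_space_SR)
  show ?thesis using assms by (intro integrable_const_bound[where B=B] AE_I2) auto
qed

lemma loss_component_measurable:
  assumes "j < n"
  shows "(\<lambda>(sr, w). loss w (fst sr j)) \<in> borel_measurable (SR \<Otimes>\<^sub>M borel)"
proof -
  have "(\<lambda>p. (snd p, fst (fst p) j)) \<in> SR \<Otimes>\<^sub>M borel \<rightarrow>\<^sub>M borel \<Otimes>\<^sub>M PZ"
    using assms by measurable
  from measurable_compose[OF this loss_meas] show ?thesis by (simp add: case_prod_beta')
qed

lemma risk_measurable: "(\<lambda>w. \<integral>z. loss w z \<partial>PZ) \<in> borel_measurable borel"
  using loss_meas by (intro sigma_finite_measure.borel_measurable_lebesgue_integral)
    (auto intro: prob_space_imp_sigma_finite PZ)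

definition point_risk :: "(nat \<Rightarrow> 'z) \<times> 'r \<Rightarrow> 'z \<Rightarrow> real" where
  "point_risk sr z = (\<integral>w. loss w z \<partial>K sr)"

lemma point_risk_measurable: "(\<lambda>(sr, z). point_risk sr z) \<in> borel_measurable (SR \<Otimes>\<^sub>M PZ)"
proof -
  have "(\<lambda>q. (snd q, snd (fst q))) \<in> (SR \<Otimes>\<^sub>M PZ) \<Otimes>\<^sub>M borel \<rightarrow>\<^sub>M borel \<Otimes>\<^sub>M PZ"
    by measurable
  from measurable_compose[OF this loss_meas]
  have "(\<lambda>(p, w). loss w (snd p)) \<in> borel_measurable ((SR \<Otimes>\<^sub>M PZ) \<Otimes>\<^sub>M borel)"
    by (simp add: case_prod_beta')
  then have "(\<lambda>p. point_risk (fst p) (snd p)) \<in> borel_measurable (SR \<Otimes>\<^sub>M PZ)"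
    unfolding point_risk_def
    by (rule integral_measurable_subprob_algebra2[where f="\<lambda>p w. loss w (snd p)"]) measurable
  then show ?thesis by (simp add: case_prod_beta')
qed

lemma abs_point_risk_le: "sr \<in> space SR \<Longrightarrow> \<bar>point_risk sr z\<bar> \<le> \<bar>a\<bar> + \<bar>b\<bar>"
  unfolding point_risk_def by (intro abs_integral_le_bound[OF K_prob] abs_loss_le)

lemma integral_loo_loss:
  assumes sr: "sr \<in> space SR" and j: "j < n"
  shows "(\<integral>w. loss w (fst sr j) \<partial>loo j sr) = (\<integral>z. point_risk ((fst sr)(j := z), snd sr) (fst sr j) \<partial>PZ)"
proof -
  have "(\<lambda>z. K ((fst sr)(j := z), snd sr)) \<in> PZ \<rightarrow>\<^sub>M subprob_algebra borel"
    using measurable_compose[OF _ K_sub, of "\<lambda>z. ((fst sr)(j := z), snd sr)"]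
      measurable_compose[OF measurable_Pair[OF measurable_const[OF sr] measurable_ident_sets[OF refl]]
        update_measurable[OF j]]
    by simp
  moreover have "prob_space (K ((fst sr)(j := z), snd sr))" if "z \<in> space PZ" for z
    using measurable_space[OF update_measurable[OF j], of "(sr, z)"] sr that
    by (intro K_prob) (simp add: space_pair_measure)
  ultimately show ?thesis
    unfolding loo_kernel_def point_risk_def using sr j abs_loss_le
    by (subst integral_bind[where B="\<bar>a\<bar> + \<bar>b\<bar>" and B'=1])
      (auto intro!: AE_I2 prob_space.finite_measure[OF PZ] simp: prob_space.emeasure_space_1
        measurable_space[OF component_measurable])
qed

lemma integral_K_risk:
  assumes sr: "sr \<in> space SR"
  shows "(\<integral>w. \<integral>z. loss w z \<partial>PZ \<partial>K sr) = (\<integral>z. point_risk sr z \<partial>PZ)"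
proof -
  interpret PZ: prob_space PZ by (rule PZ)
  interpret Ksr: prob_space "K sr" by (rule K_prob[OF sr])
  interpret KZ: pair_prob_space "K sr" PZ ..
  have "(\<lambda>(w, z). loss w z) \<in> borel_measurable (K sr \<Otimes>\<^sub>M PZ)"
    using loss_meas by (simp add: measurable_cong_sets[OF sets_pair_measure_cong[OF sets_K[OF sr] refl] refl])
  then have "integrable (K sr \<Otimes>\<^sub>M PZ) (\<lambda>(w, z). loss w z)"
    by (intro KZ.integrable_const_bound[where B="\<bar>a\<bar> + \<bar>b\<bar>"] AE_I2) (auto simp: abs_loss_le)
  then show ?thesis unfolding point_risk_def by (simp add: KZ.Fubini_integral)
qed

lemma integral_loo_loss_eq:
  assumes j: "j < n"
  shows "(\<integral>sr. (\<integral>w. loss w (fst sr j) \<partial>loo j sr) \<partial>SR) = (\<integral>sr. (\<integral>w. \<integral>z. loss w z \<partial>PZ \<partial>K sr) \<partial>SR)"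
proof -
  interpret PZ: prob_space PZ by (rule PZ)
  interpret PR: prob_space PR by (rule PR)
  interpret S: prob_space "sample_dist n PZ"
    unfolding sample_dist_def by (rule prob_space_PiM) (rule PZ)
  interpret SR: pair_prob_space "sample_dist n PZ" PR ..
  define T1 where "T1 sr = (\<integral>z. point_risk ((fst sr)(j := z), snd sr) (fst sr j) \<partial>PZ)" for sr
  define T2 where "T2 sr = (\<integral>z. point_risk sr z \<partial>PZ)" for sr
  have "(\<lambda>p. (((fst (fst p))(j := snd p), snd (fst p)), fst (fst p) j)) \<in> SR \<Otimes>\<^sub>M PZ \<rightarrow>\<^sub>M SR \<Otimes>\<^sub>M PZ"
    using update_measurable[OF j] j
    by (intro measurable_Pair) (auto simp: case_prod_beta' intro: measurable_compose[OF measurable_fst])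
  from measurable_compose[OF this point_risk_measurable]
  have "T1 \<in> borel_measurable SR" "T2 \<in> borel_measurable SR"
    using point_risk_measurable unfolding T1_def[abs_def] T2_def[abs_def]
    by (auto intro!: PZ.borel_measurable_lebesgue_integral simp: case_prod_beta')
  moreover have "\<bar>T1 sr\<bar> \<le> \<bar>a\<bar> + \<bar>b\<bar>" "\<bar>T2 sr\<bar> \<le> \<bar>a\<bar> + \<bar>b\<bar>" if sr: "sr \<in> space SR" for sr
    using sr measurable_space[OF update_measurable[OF j]] unfolding T1_def T2_def
    by (auto intro!: abs_integral_le_bound[OF PZ] abs_point_risk_le simp: space_pair_measure)
  ultimately have T_int: "integrable SR T1" "integrable SR T2"
    by (auto intro!: integrable_SR[where B="\<bar>a\<bar> + \<bar>b\<bar>"])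
  have "(\<integral>s. T1 (s, r) \<partial>sample_dist n PZ) = (\<integral>s. T2 (s, r) \<partial>sample_dist n PZ)"
    if r: "r \<in> space PR" for r
    unfolding T1_def T2_def fst_conv snd_conv
  proof (rule integral_sample_dist_swap[OF PZ j, symmetric])
    show "(\<lambda>(s, z). point_risk (s, r) z) \<in> borel_measurable (sample_dist n PZ \<Otimes>\<^sub>M PZ)"
      using measurable_compose[OF _ point_risk_measurable, of "\<lambda>p. ((fst p, r), snd p)"] r
      by (simp add: case_prod_beta')
    show "\<bar>point_risk (s, r) z\<bar> \<le> \<bar>a\<bar> + \<bar>b\<bar>" if "s \<in> space (sample_dist n PZ)" for s z
      using that r by (intro abs_point_risk_le) (simp add: space_pair_measure)
  qed
  then have "(\<integral>sr. T1 sr \<partial>SR) = (\<integral>sr. T2 sr \<partial>SR)"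
    using T_int SR.integral_snd[of "\<lambda>s r. T1 (s, r)"] SR.integral_snd[of "\<lambda>s r. T2 (s, r)"]
    by (simp cong: Bochner_Integration.integral_cong)
  then show ?thesis
    using j by (simp add: integral_loo_loss integral_K_risk T1_def T2_def cong: Bochner_Integration.integral_cong)
qed

lemma integrable_K:
  fixes f :: "'w \<Rightarrow> real"
  assumes sr: "sr \<in> space SR" and f: "f \<in> borel_measurable borel" and bnd: "\<And>w. \<bar>f w\<bar> \<le> B"
  shows "integrable (K sr) f"
proof -
  interpret prob_space "K sr" by (rule K_prob[OF sr])
  show ?thesis
    using f bnd by (intro integrable_const_bound[where B=B] AE_I2) (auto simp: measurable_cong_sets[OF sets_K[OF sr] refl])
qed

lemma
  assumes "j < n"
  shows measurable_integral_K_loss: "(\<lambda>sr. \<integral>w. loss w (fst sr j) \<partial>K sr) \<in> borel_measurable SR"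
    and measurable_integral_loo_loss: "(\<lambda>sr. \<integral>w. loss w (fst sr j) \<partial>loo j sr) \<in> borel_measurable SR"
  using loss_component_measurable[OF assms] K_sub measurable_prob_algebraD[OF loo_measurable[OF assms]]
  by (auto intro: integral_measurable_subprob_algebra2[where f="\<lambda>sr w. loss w (fst sr j)"])

lemma
  assumes "j < n"
  shows integrable_integral_K_loss: "integrable SR (\<lambda>sr. \<integral>w. loss w (fst sr j) \<partial>K sr)"
    and integrable_integral_loo_loss: "integrable SR (\<lambda>sr. \<integral>w. loss w (fst sr j) \<partial>loo j sr)"
  using measurable_integral_K_loss[OF assms] measurable_integral_loo_loss[OF assms] K_prob loo_prob[OF _ assms]
  by (auto intro!: integrable_SR[where B="\<bar>a\<bar> + \<bar>b\<bar>"] abs_integral_le_bound abs_loss_le)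

lemma exp_gen_eq_loo_sum:
  assumes n: "0 < n"
  shows "exp_gen n PZ PR K loss
    = (\<Sum>j<n. \<integral>sr. (\<integral>w. loss w (fst sr j) \<partial>loo j sr) - (\<integral>w. loss w (fst sr j) \<partial>K sr) \<partial>SR) / n"
proof -
  define B where "B = \<bar>a\<bar> + \<bar>b\<bar>"
  define R where "R sr = (\<integral>w. \<integral>z. loss w z \<partial>PZ \<partial>K sr)" for sr
  define E where "E j sr = (\<integral>w. loss w (fst sr j) \<partial>K sr)" for j sr
  define L where "L j sr = (\<integral>w. loss w (fst sr j) \<partial>loo j sr)" for j sr
  have risk_bnd: "\<bar>\<integral>z. loss w z \<partial>PZ\<bar> \<le> B" for w
    unfolding B_def by (intro abs_integral_le_bound[OF PZ] abs_loss_le)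
  have R_int: "integrable SR R"
  proof (rule integrable_SR)
    have "(\<lambda>(sr, w). \<integral>z. loss w z \<partial>PZ) \<in> borel_measurable (SR \<Otimes>\<^sub>M borel)"
      using measurable_compose[OF measurable_snd risk_measurable] by (simp add: case_prod_beta')
    then show "R \<in> borel_measurable SR"
      unfolding R_def[abs_def] by (rule integral_measurable_subprob_algebra2[OF _ K_sub])
    show "\<bar>R sr\<bar> \<le> B" if "sr \<in> space SR" for sr
      unfolding R_def using that risk_bnd by (intro abs_integral_le_bound[OF K_prob])
  qed
  have EL_int: "integrable SR (E j)" "integrable SR (L j)" if j: "j < n" for j
    unfolding E_def[abs_def] L_def[abs_def]
    by (intro integrable_integral_K_loss[OF j] integrable_integral_loo_loss[OF j])+
  have inner: "(\<integral>w. (\<integral>z. loss w z \<partial>PZ) - (\<Sum>i<n. loss w (fst sr i)) / real n \<partial>K sr)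
      = R sr - (\<Sum>i<n. E i sr) / real n" if sr: "sr \<in> space SR" for sr
  proof -
    have int_loss: "integrable (K sr) (\<lambda>w. loss w (fst sr i))" if "i < n" for i
      using sr that measurable_space[OF component_measurable] abs_loss_le by (intro integrable_K) auto
    have "(\<integral>w. (\<integral>z. loss w z \<partial>PZ) - (\<Sum>i<n. loss w (fst sr i)) / real n \<partial>K sr)
        = R sr - (\<integral>w. (\<Sum>i<n. loss w (fst sr i)) / real n \<partial>K sr)"
      unfolding R_def using integrable_K[OF sr risk_measurable risk_bnd] int_loss
      by (intro Bochner_Integration.integral_diff integrable_divide integrable_sum) auto
    also have "(\<integral>w. (\<Sum>i<n. loss w (fst sr i)) / real n \<partial>K sr) = (\<Sum>i<n. E i sr) / real n"
      unfolding E_def using int_loss by (simp add: integral_sum)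
    finally show ?thesis .
  qed
  have "exp_gen n PZ PR K loss = (\<integral>sr. R sr - (\<Sum>j<n. E j sr) / real n \<partial>SR)"
    unfolding exp_gen_def using inner by (intro Bochner_Integration.integral_cong) auto
  also have "\<dots> = (\<integral>sr. R sr \<partial>SR) - (\<integral>sr. (\<Sum>j<n. E j sr) / real n \<partial>SR)"
    using EL_int by (intro Bochner_Integration.integral_diff R_int integrable_divide integrable_sum) auto
  also have "(\<integral>sr. (\<Sum>j<n. E j sr) / real n \<partial>SR) = (\<Sum>j<n. \<integral>sr. E j sr \<partial>SR) / real n"
    using EL_int by (simp add: integral_sum)
  also have "(\<integral>sr. R sr \<partial>SR) = (\<Sum>j<n. \<integral>sr. L j sr \<partial>SR) / real n"
    using n integral_loo_loss_eq by (simp add: L_def R_def)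
  also have "(\<Sum>j<n. \<integral>sr. L j sr \<partial>SR) / real n - (\<Sum>j<n. \<integral>sr. E j sr \<partial>SR) / real n
      = (\<Sum>j<n. \<integral>sr. L j sr - E j sr \<partial>SR) / real n"
    using EL_int by (simp add: diff_divide_distrib sum_subtractf)
  finally show ?thesis by (simp add: L_def E_def)
qed

lemma a_le_b: "a \<le> b"
  using loss_bounded[of undefined undefined] by linarith

lemma
  assumes "j < n"
  shows integrable_tv_dist_loo: "integrable SR (\<lambda>sr. tv_dist (K sr) (loo j sr))"
    and integrable_Psi_loo: "integrable SR (\<lambda>sr. Psi (rel_entropy (K sr) (loo j sr)))"
proof -
  have sets_eq: "sets (K sr) = sets (loo j sr)" if "sr \<in> space SR" for sr
    using sets_K[OF that] sets_loo[OF that assms] by simp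
  have "(\<lambda>sr. Psi (rel_entropy (K sr) (loo j sr))) \<in> borel_measurable SR"
    using measurable_rel_entropy[OF K_meas loo_measurable[OF assms]] by measurable
  moreover have "\<bar>Psi (rel_entropy (K sr) (loo j sr))\<bar> \<le> 1" if sr: "sr \<in> space SR" for sr
    using Psi_nonneg[OF rel_entropy_nonneg[OF K_prob[OF sr] loo_prob[OF sr assms] sets_eq[OF sr]]]
    by (simp add: Psi_le_1)
  ultimately show "integrable SR (\<lambda>sr. Psi (rel_entropy (K sr) (loo j sr)))"
    by (rule integrable_SR)
  have "\<bar>tv_dist (K sr) (loo j sr)\<bar> \<le> 1" if sr: "sr \<in> space SR" for sr
    using tv_dist_nonneg[OF K_prob[OF sr]] tv_dist_le_1[OF K_prob[OF sr] loo_prob[OF sr assms] sets_eq[OF sr]]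
    by simp
  with measurable_tv_dist[OF K_meas loo_measurable[OF assms]]
  show "integrable SR (\<lambda>sr. tv_dist (K sr) (loo j sr))"
    by (rule integrable_SR)
qed

lemma abs_exp_gen_le_tv_dist:
  assumes n: "0 < n"
  shows "\<bar>exp_gen n PZ PR K loss\<bar>
    \<le> (b - a) * ((1 / real n) * (\<Sum>j<n. \<integral>sr. tv_dist (K sr) (loo j sr) \<partial>SR))"
proof -
  define D where "D j sr = (\<integral>w. loss w (fst sr j) \<partial>loo j sr) - (\<integral>w. loss w (fst sr j) \<partial>K sr)" for j sr
  have "\<bar>\<integral>sr. D j sr \<partial>SR\<bar> \<le> (b - a) * (\<integral>sr. tv_dist (K sr) (loo j sr) \<partial>SR)" if j: "j < n" for j
  proof -
    have D_bnd: "\<bar>D j sr\<bar> \<le> (b - a) * tv_dist (K sr) (loo j sr)" if sr: "sr \<in> space SR" for sr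
    proof -
      have "(\<lambda>w. loss w (fst sr j)) \<in> borel_measurable (K sr)"
        using measurable_space[OF component_measurable[OF j] sr]
        by (simp add: measurable_cong_sets[OF sets_K[OF sr] refl])
      from abs_integral_diff_le_tv_dist[OF K_prob[OF sr] loo_prob[OF sr j] _ this loss_bounded]
      show ?thesis using sets_K[OF sr] sets_loo[OF sr j] by (simp add: D_def abs_minus_commute)
    qed
    have "integrable SR (D j)"
      unfolding D_def[abs_def]
      by (intro Bochner_Integration.integrable_diff integrable_integral_K_loss[OF j]
          integrable_integral_loo_loss[OF j])
    then have "\<bar>\<integral>sr. D j sr \<partial>SR\<bar> \<le> (\<integral>sr. (b - a) * tv_dist (K sr) (loo j sr) \<partial>SR)"
      using D_bnd integrable_tv_dist_loo[OF j]
      by (intro order_trans[OF integral_abs_bound] integral_mono) auto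
    then show ?thesis by simp
  qed
  then have "(\<Sum>j<n. \<bar>\<integral>sr. D j sr \<partial>SR\<bar>) / n \<le> (\<Sum>j<n. (b - a) * (\<integral>sr. tv_dist (K sr) (loo j sr) \<partial>SR)) / n"
    by (intro divide_right_mono sum_mono) auto
  have "\<bar>exp_gen n PZ PR K loss\<bar> = \<bar>\<Sum>j<n. \<integral>sr. D j sr \<partial>SR\<bar> / n"
    using exp_gen_eq_loo_sum[OF n] by (simp add: D_def)
  also have "\<dots> \<le> (\<Sum>j<n. \<bar>\<integral>sr. D j sr \<partial>SR\<bar>) / n"
    by (intro divide_right_mono sum_abs) auto
  also note \<open>(\<Sum>j<n. \<bar>\<integral>sr. D j sr \<partial>SR\<bar>) / n \<le> _\<close>
  also have "(\<Sum>j<n. (b - a) * (\<integral>sr. tv_dist (K sr) (loo j sr) \<partial>SR)) / n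
      = (b - a) * ((1 / real n) * (\<Sum>j<n. \<integral>sr. tv_dist (K sr) (loo j sr) \<partial>SR))"
    by (simp add: sum_distrib_left sum_divide_distrib)
  finally show ?thesis .
qed

lemma tv_dist_sum_le_Psi_sum:
  "(b - a) * ((1 / real n) * (\<Sum>j<n. \<integral>sr. tv_dist (K sr) (loo j sr) \<partial>SR))
    \<le> (b - a) / real n * (\<Sum>j<n. \<integral>sr. Psi (rel_entropy (K sr) (loo j sr)) \<partial>SR)"
proof -
  have "(\<integral>sr. tv_dist (K sr) (loo j sr) \<partial>SR) \<le> (\<integral>sr. Psi (rel_entropy (K sr) (loo j sr)) \<partial>SR)"
    if j: "j < n" for j
    using integrable_tv_dist_loo[OF j] integrable_Psi_loo[OF j] K_prob loo_prob[OF _ j] sets_K sets_loo[OF _ j]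
    by (intro integral_mono tv_dist_le_Psi) auto
  then have "(\<Sum>j<n. \<integral>sr. tv_dist (K sr) (loo j sr) \<partial>SR)
      \<le> (\<Sum>j<n. \<integral>sr. Psi (rel_entropy (K sr) (loo j sr)) \<partial>SR)"
    by (intro sum_mono) auto
  then have "(b - a) * (\<Sum>j<n. \<integral>sr. tv_dist (K sr) (loo j sr) \<partial>SR)
      \<le> (b - a) * (\<Sum>j<n. \<integral>sr. Psi (rel_entropy (K sr) (loo j sr)) \<partial>SR)"
    using a_le_b by (intro mult_left_mono) auto
  then show ?thesis using divide_right_mono[of _ _ "real n"] by simp
qed

end

theorem corollary2:
  fixes n :: nat and PZ :: "'z measure" and PR :: "'r measure"
    and K :: "(nat \<Rightarrow> 'z) \<times> 'r \<Rightarrow> 'w::polish_space measure"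
    and loss :: "'w \<Rightarrow> 'z \<Rightarrow> real" and L a b :: real
  assumes n_pos: "n > 0"
    and PZ: "prob_space PZ" and PR: "prob_space PR"
    and K_meas: "K \<in> sample_dist n PZ \<Otimes>\<^sub>M PR \<rightarrow>\<^sub>M prob_algebra (borel :: 'w measure)"
    and loss_meas: "(\<lambda>(w, z). loss w z) \<in> borel_measurable (borel \<Otimes>\<^sub>M PZ)"
    and lipschitz: "\<And>z. L-lipschitz_on UNIV (\<lambda>w. loss w z)"
    and bounded: "\<And>w z. a \<le> loss w z \<and> loss w z \<le> b"
  shows "\<bar>exp_gen n PZ PR K loss\<bar>
           \<le> (b - a) * ((1 / real n) * (\<Sum>j<n. \<integral>sr. tv_dist (K sr) (loo_kernel PZ K j (fst sr) (snd sr))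
                                              \<partial>(sample_dist n PZ \<Otimes>\<^sub>M PR)))
       \<and> (b - a) * ((1 / real n) * (\<Sum>j<n. \<integral>sr. tv_dist (K sr) (loo_kernel PZ K j (fst sr) (snd sr))
                                              \<partial>(sample_dist n PZ \<Otimes>\<^sub>M PR)))
           \<le> (b - a) / real n * (\<Sum>j<n. \<integral>sr. Psi (rel_entropy (K sr) (loo_kernel PZ K j (fst sr) (snd sr)))
                                              \<partial>(sample_dist n PZ \<Otimes>\<^sub>M PR))"
proof -
  interpret bounded_loss_learning n PZ PR K loss a b
    by (rule bounded_loss_learning.intro[OF PZ PR K_meas loss_meas bounded])
  show ?thesis
    using abs_exp_gen_le_tv_dist[OF n_pos] tv_dist_sum_le_Psi_sum by blast
qed

end
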